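(* Let $N\ge1$ be odd and $\chi$ a primitive Dirichlet character modulo $N$. Then $\overline\gamma_\chi=\operatorname{Ind}_{\overline\Gamma_\theta\cap\overline\Gamma_0(N^2)}^{\overline\Gamma_0(N^2)}\overline\lambda_\chi^{-1}$ is an irreducible representation of $\overline\Gamma_0(N^2)$.
   Context: Hilbert symbol $(x,y)_{\mathbb R}=-1$ if $x<0,y<0$, else $1$. For $g=\begin{pmatrix}a&b\\c&d\end{pmatrix}\in SL_2(\mathbb R)$, $x(g)=d$ if $c=0$ and $x(g)=c$ otherwise; $\bar c(g_1,g_2)=(x(g_1),x(g_2))_{\mathbb R}(-x(g_1)x(g_2),x(g_1g_2))_{\mathbb R}$; $\overline{SL}_2(\mathbb R)=SL_2(\mathbb R)\times\{\pm1\}$ with $(g_1,\epsilon_1)(g_2,\epsilon_2)=(g_1g_2,\bar c(g_1,g_2)\epsilon_1\epsilon_2)$, and $\overline\Gamma$ denotes the preimage of $\Gamma$. Kronecker symbol with $\left(\frac01\right)=1,\left(\frac0{-1}\right)=-1$; $\epsilon_d=1$ or $i$ as $d\equiv1$ or $3\pmod4$. $\omega=\begin{pmatrix}0&-1\\1&0\end{pmatrix}$, $\Gamma(2)=\{g\in SL_2(\mathbb Z):g\equiv I\bmod2\}$, $\Gamma_\theta=\{ac\equiv bd\equiv0\bmod2\}=\Gamma(2)\sqcup\Gamma(2)\omega$, $\Gamma_0(M)=\{M\mid c\}$. $\lambda(r)=\left(\frac{2c}{d}\right)\epsilon_d^{-1}$ for $r\in\Gamma(2)$; for $r=r_1\omega$,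 $r_1=\begin{pmatrix}a_1&b_1\\c_1&d_1\end{pmatrix}\in\Gamma(2)$, $\lambda(r)=\left(\frac{2c_1}{d_1}\right)\epsilon_{d_1}^{-1}e^{-i\pi/4}(-c_1,d_1)_{\mathbb R}$. The character $\overline\lambda_\chi$ of $\overline\Gamma_\theta\cap\overline\Gamma_0(N^2)$ is $\overline\lambda_\chi((r,\epsilon))=\lambda(r)\chi(d)\epsilon$ for $r=\begin{pmatrix}a&b\\c&d\end{pmatrix}$. *)

theory Defs
  imports Complex_Main "HOL-Number_Theory.Number_Theory"
begin

section \<open>Integer 2x2 matrices, written (a,b,c,d) for [[a,b],[c,d]]\<close>

type_synonym mat2 = "int \<times> int \<times> int \<times> int"

fun m2mult :: "mat2 \<Rightarrow> mat2 \<Rightarrow> mat2" where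
  "m2mult (a1,b1,c1,d1) (a2,b2,c2,d2) =
     (a1*a2 + b1*c2, a1*b2 + b1*d2, c1*a2 + d1*c2, c1*b2 + d1*d2)"

definition omega :: mat2 where "omega = (0, -1, 1, 0)"
definition omega_inv :: mat2 where "omega_inv = (0, 1, -1, 0)"

fun in_SL2Z :: "mat2 \<Rightarrow> bool" where
  "in_SL2Z (a,b,c,d) \<longleftrightarrow> a*d - b*c = 1"

definition hilbert_R :: "int \<Rightarrow> int \<Rightarrow> int" where
  "hilbert_R x y = (if x < 0 \<and> y < 0 then -1 else 1)"

fun xfun :: "mat2 \<Rightarrow> int" where
  "xfun (a,b,c,d) = (if c = 0 then d else c)"

definition cocycle :: "mat2 \<Rightarrow> mat2 \<Rightarrow> int" where
  "cocycle g1 g2 = hilbert_R (xfun g1) (xfun g2) *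
                   hilbert_R (- (xfun g1 * xfun g2)) (xfun (m2mult g1 g2))"

fun mp_mult :: "mat2 \<times> int \<Rightarrow> mat2 \<times> int \<Rightarrow> mat2 \<times> int" where
  "mp_mult (g1, e1) (g2, e2) = (m2mult g1 g2, cocycle g1 g2 * e1 * e2)"

definition mp_Gamma0 :: "nat \<Rightarrow> (mat2 \<times> int) set" where
  "mp_Gamma0 M = {((a,b,c,d), e). a*d - b*c = 1 \<and> int M dvd c \<and> (e = 1 \<or> e = -1)}"

definition mp_Gamma_theta0 :: "nat \<Rightarrow> (mat2 \<times> int) set" where
  "mp_Gamma_theta0 M = {((a,b,c,d), e). ((a,b,c,d), e) \<in> mp_Gamma0 M \<and>
                         even (a*c) \<and> even (b*d)}"

section \<open>Kronecker symbol (with the conventions (0/1)=1, (0/-1)=-1)\<close>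

definition kron2 :: "int \<Rightarrow> int" where
  "kron2 a = (if even a then 0 else if a mod 8 = 1 \<or> a mod 8 = 7 then 1 else -1)"

definition kronecker :: "int \<Rightarrow> int \<Rightarrow> int" where
  "kronecker a n =
    (if n = 0 then (if \<bar>a\<bar> = 1 then 1 else 0)
     else (if n < 0 \<and> a \<le> 0 then -1 else 1) *
          (\<Prod>p\<in>prime_factors (nat \<bar>n\<bar>).
              (if p = 2 then kron2 a else Legendre a (int p)) ^ multiplicity p (nat \<bar>n\<bar>)))"

definition eps :: "int \<Rightarrow> complex" where
  "eps d = (if d mod 4 = 1 then 1 else \<i>)"

fun theta_lambda :: "mat2 \<Rightarrow> complex" where
  "theta_lambda (a,b,c,d) =
     (if even c then of_int (kronecker (2*c) d) * inverse (eps d)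
      else (case m2mult (a,b,c,d) omega_inv of (a1,b1,c1,d1) \<Rightarrow>
              of_int (kronecker (2*c1) d1) * inverse (eps d1) * cis (- pi / 4)
              * of_int (hilbert_R (-c1) d1)))"

fun lambda_bar :: "(int \<Rightarrow> complex) \<Rightarrow> mat2 \<times> int \<Rightarrow> complex" where
  "lambda_bar \<chi> ((a,b,c,d), e) = theta_lambda (a,b,c,d) * \<chi> d * of_int e"

definition dirichlet_character :: "nat \<Rightarrow> (int \<Rightarrow> complex) \<Rightarrow> bool" where
  "dirichlet_character N \<chi> \<longleftrightarrow> N > 0 \<and>
     (\<forall>n. \<chi> (n + int N) = \<chi> n) \<and>
     (\<forall>m n. \<chi> (m * n) = \<chi> m * \<chi> n) \<and>
     \<chi> 1 = 1 \<and>
     (\<forall>n. \<chi> n = 0 \<longleftrightarrow> \<not> coprime n (int N))"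

definition primitive_dirichlet_character :: "nat \<Rightarrow> (int \<Rightarrow> complex) \<Rightarrow> bool" where
  "primitive_dirichlet_character N \<chi> \<longleftrightarrow> dirichlet_character N \<chi> \<and>
     \<not> (\<exists>M::nat. 0 < M \<and> M dvd N \<and> M < N \<and>
          (\<forall>n. coprime n (int N) \<and> [n = 1] (mod int M) \<longrightarrow> \<chi> n = 1))"

definition ind_space ::
  "'g set \<Rightarrow> ('g \<Rightarrow> 'g \<Rightarrow> 'g) \<Rightarrow> 'g set \<Rightarrow> ('g \<Rightarrow> complex) \<Rightarrow> ('g \<Rightarrow> complex) set" where
  "ind_space G gmul H \<sigma> = {f. (\<forall>x. x \<notin> G \<longrightarrow> f x = 0) \<and>
       (\<forall>h\<in>H. \<forall>g\<in>G. f (gmul h g) = \<sigma> h * f g)}"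

definition right_transl :: "'g set \<Rightarrow> ('g \<Rightarrow> 'g \<Rightarrow> 'g) \<Rightarrow> 'g \<Rightarrow> ('g \<Rightarrow> complex) \<Rightarrow> ('g \<Rightarrow> complex)" where
  "right_transl G gmul g f = (\<lambda>x. if x \<in> G then f (gmul x g) else 0)"

definition invariant_subspace ::
  "'g set \<Rightarrow> ('g \<Rightarrow> 'g \<Rightarrow> 'g) \<Rightarrow> ('g \<Rightarrow> complex) set \<Rightarrow> ('g \<Rightarrow> complex) set \<Rightarrow> bool" where
  "invariant_subspace G gmul V W \<longleftrightarrow> W \<subseteq> V \<and> (\<lambda>_. 0) \<in> W \<and>
     (\<forall>f\<in>W. \<forall>f'\<in>W. (\<lambda>x. f x + f' x) \<in> W) \<and>
     (\<forall>c::complex. \<forall>f\<in>W. (\<lambda>x. c * f x) \<in> W) \<and>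
     (\<forall>g\<in>G. \<forall>f\<in>W. right_transl G gmul g f \<in> W)"

definition irreducible_ind_rep ::
  "'g set \<Rightarrow> ('g \<Rightarrow> 'g \<Rightarrow> 'g) \<Rightarrow> 'g set \<Rightarrow> ('g \<Rightarrow> complex) \<Rightarrow> bool" where
  "irreducible_ind_rep G gmul H \<sigma> \<longleftrightarrow>
     (let V = ind_space G gmul H \<sigma> in
       V \<noteq> {\<lambda>_. 0} \<and>
       (\<forall>W. invariant_subspace G gmul V W \<longrightarrow> W = {\<lambda>_. 0} \<or> W = V))"

end

(*
  The intersection of Gamma_theta and Gamma_0(N^2) has index 3 in Gamma_0(N^2), with coset
  representatives 1, T = (1 1; 0 1) and L = (1 0; N^2 1), so a vector of the induced space is
  determined by its three values there. The elements T^2 and L^2 = (1 0; 2 N^2 1) of the subgroup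
  act diagonally in these coordinates: each fixes two coordinates and multiplies the third by the
  value of the inducing character at a matrix with lower right entry d = 1 +- 2 N^2. As
  d = 3 (mod 4) and d = 1 (mod N), that value is i times a Kronecker symbol, hence not 1.
  Projections built from T^2 and L^2 therefore carry any nonzero vector of an invariant subspace
  to one supported on the subgroup, whose translates by T^-1 and L^-1 span the whole space.

  The substantial part is that the inducing character is a character at all, i.e. that the
  theta multiplier lambda is multiplicative on the metaplectic Gamma_theta. Along the Euclidean
  algorithm with the generators T^2 and omega this reduces to the behaviour of lambda under
  right multiplication by T^2 and by omega. The first is the periodicity of the Kronecker
  symbol (2c / d) in d modulo 2c, which follows from Jacobi reciprocity; the second is a sign
  computation together with the cocycle relation for the triples (x, y, omega), which is
  settled by following the quadrants of the bottom rows.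
*)

theory Submission
  imports Defs
begin

section \<open>Legendre and Jacobi symbols\<close>

text \<open>The characters modulo 4 and 8 of the supplementary laws; only their values at odd
  arguments matter.\<close>

definition chi4 :: "int \<Rightarrow> int" where
  "chi4 n = (if n mod 4 = 1 then 1 else -1)"

definition chi8 :: "int \<Rightarrow> int" where
  "chi8 n = (if n mod 8 = 1 \<or> n mod 8 = 7 then 1 else -1)"

lemma chi4_mult:
  assumes "odd m" "odd n" shows "chi4 (m * n) = chi4 m * chi4 n"
proof -
  have "m mod 4 = 1 \<or> m mod 4 = 3" "n mod 4 = 1 \<or> n mod 4 = 3" using assms by presburger+
  moreover have "(m * n) mod 4 = (m mod 4) * (n mod 4) mod 4" by (simp add: mod_mult_eq)
  ultimately show ?thesis unfolding chi4_def by auto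
qed

lemma chi8_mult:
  assumes "odd m" "odd n" shows "chi8 (m * n) = chi8 m * chi8 n"
proof -
  have "m mod 8 = 1 \<or> m mod 8 = 3 \<or> m mod 8 = 5 \<or> m mod 8 = 7"
       "n mod 8 = 1 \<or> n mod 8 = 3 \<or> n mod 8 = 5 \<or> n mod 8 = 7" using assms by presburger+
  moreover have "(m * n) mod 8 = (m mod 8) * (n mod 8) mod 8" by (simp add: mod_mult_eq)
  ultimately show ?thesis unfolding chi8_def by auto
qed

lemma Legendre_values: "Legendre a p \<in> {-1, 0, 1}"
  by (auto simp: Legendre_def)

lemma Legendre_cong:
  assumes "[a = b] (mod p)" shows "Legendre a p = Legendre b p"
proof -
  have "[a = 0] (mod p) \<longleftrightarrow> [b = 0] (mod p)" "QuadRes p a \<longleftrightarrow> QuadRes p b"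
    unfolding QuadRes_def using assms cong_sym cong_trans by blast+
  then show ?thesis unfolding Legendre_def by simp
qed

lemma cong_signs_imp_eq:
  fixes x y :: int
  assumes "[x = y] (mod int p)" "p > 2" "x \<in> {-1, 0, 1}" "y \<in> {-1, 0, 1}"
  shows "x = y"
proof (rule ccontr)
  assume "x \<noteq> y"
  moreover have "int p dvd x - y" using assms(1) by (simp add: cong_iff_dvd_diff)
  ultimately have "\<bar>int p\<bar> \<le> \<bar>x - y\<bar>" by (intro dvd_imp_le_int) auto
  with assms show False by auto
qed

lemma Legendre_mult:
  assumes "prime p" "p > 2"
  shows "Legendre (a * b) (int p) = Legendre a (int p) * Legendre b (int p)"
proof -
  have "[Legendre (a * b) p = (a * b) ^ ((p - 1) div 2)] (mod p)"
       "[Legendre a p * Legendre b p = a ^ ((p - 1) div 2) * b ^ ((p - 1) div 2)] (mod p)"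
    using euler_criterion[OF assms] cong_mult by blast+
  then have "[Legendre (a * b) p = Legendre a p * Legendre b p] (mod p)"
    by (metis cong_sym cong_trans power_mult_distrib)
  moreover have "Legendre a p * Legendre b p \<in> {-1, 0, 1}"
    using Legendre_values[of a p] Legendre_values[of b p] by auto
  ultimately show ?thesis using cong_signs_imp_eq assms(2) Legendre_values by blast
qed

lemma Legendre_minus_one:
  assumes "prime p" "p > 2"
  shows "Legendre (-1) (int p) = chi4 (int p)"
proof -
  have "odd p" using assms prime_odd_nat by blast
  then have "even ((p - 1) div 2) \<longleftrightarrow> int p mod 4 = 1" by presburger
  then have "(-1::int) ^ ((p - 1) div 2) = chi4 (int p)"
    unfolding chi4_def by (simp add: minus_one_power_iff)
  then have "[Legendre (-1) p = chi4 (int p)] (mod p)" using euler_criterion[OF assms, of "-1"]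
    by simp
  then show ?thesis
    using cong_signs_imp_eq assms(2) Legendre_values by (auto simp: chi4_def)
qed

lemma Legendre_one: "p > 1 \<Longrightarrow> Legendre 1 p = 1"
  by (auto simp: Legendre_def QuadRes_def cong_0_iff zdvd_not_zless intro: exI[of _ 1])

text \<open>Gauss's lemma: of the residues \<open>2x\<close>, \<open>0 < x \<le> h = (p - 1) / 2\<close>, those exceeding \<open>p / 2\<close>
  are the ones with \<open>x > h div 2\<close>.\<close>

lemma Legendre_two:
  assumes "prime p" "p > 2"
  shows "Legendre 2 (int p) = chi8 (int p)"
proof -
  have "odd p" using assms prime_odd_nat by blast
  interpret G: GAUSS p 2
  proof
    show "[2 \<noteq> 0] (mod int p)"
    proof
      assume "[2 = 0] (mod int p)"
      then have "p dvd 2" by (simp add: cong_0_iff) presburger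
      with assms show False by (simp add: dvd_imp_le leD)
    qed
  qed (use assms in auto)
  define h where "h = (int p - 1) div 2"
  have hp: "2 * h = int p - 1" unfolding h_def using \<open>odd p\<close> by presburger
  have "G.C = (\<lambda>x. (x * 2) mod int p) ` {0<..h}"
    unfolding G.C_def G.B_def G.A_def h_def by (simp add: image_image)
  also have "\<dots> = (\<lambda>x. x * 2) ` {0<..h}"
    by (rule image_cong[OF refl]) (use hp in auto)
  finally have "G.E = (\<lambda>x. x * 2) ` {h div 2 + 1..h}"
    unfolding G.E_def h_def[symmetric] by (auto simp: image_iff)
  then have "card G.E = nat (h - h div 2)"
    by (simp add: card_image inj_on_def)
  then have "Legendre 2 (int p) = (-1) ^ nat (h - h div 2)" using G.gauss_lemma by simp
  moreover have "even (nat (h - h div 2)) \<longleftrightarrow> even (h - h div 2)"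
    using hp by (simp add: even_nat_iff)
  moreover have "even (h - h div 2) \<longleftrightarrow> int p mod 8 = 1 \<or> int p mod 8 = 7"
    using hp by presburger
  ultimately show ?thesis unfolding chi8_def by auto
qed

definition jacobi :: "int \<Rightarrow> nat \<Rightarrow> int" where
  "jacobi a m = (\<Prod>p\<in>#prime_factorization m. Legendre a (int p))"

lemma jacobi_1 [simp]: "jacobi a 1 = 1" "jacobi a (Suc 0) = 1"
  by (simp_all add: jacobi_def)

lemma jacobi_one_left [simp]: "jacobi 1 m = 1"
  unfolding jacobi_def
  by (rule prod_mset.neutral)
    (auto intro!: Legendre_one simp: prime_gt_Suc_0_nat in_prime_factors_iff)

lemma jacobi_prime: "prime p \<Longrightarrow> jacobi a p = Legendre a (int p)"
  by (simp add: jacobi_def prime_factorization_prime)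

lemma jacobi_mult_right: "m > 0 \<Longrightarrow> n > 0 \<Longrightarrow> jacobi a (m * n) = jacobi a m * jacobi a n"
  by (simp add: jacobi_def prime_factorization_mult)

lemma odd_prime_factors_induct [consumes 1, case_names one prime_mult]:
  fixes m :: nat
  assumes "odd m" "P 1" "\<And>p m. prime p \<Longrightarrow> p > 2 \<Longrightarrow> odd m \<Longrightarrow> P m \<Longrightarrow> P (p * m)"
  shows "P m"
  using assms(1)
proof (induction m rule: prime_divisors_induct)
  case (factor p m)
  then have "odd p" "odd m" by auto
  with \<open>prime p\<close> have "p > 2" by (metis le_neq_implies_less prime_ge_2_nat even_numeral)
  with factor assms(3) \<open>odd m\<close> show ?case by blast
qed (use assms(2) in auto)

lemma jacobi_mult_left:
  assumes "odd m" shows "jacobi (a * b) m = jacobi a m * jacobi b m"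
  using assms
proof (induction m rule: odd_prime_factors_induct)
  case (prime_mult p m)
  then show ?case
    by (simp add: jacobi_mult_right jacobi_prime Legendre_mult prime_gt_0_nat odd_pos)
qed simp

lemma jacobi_cong:
  assumes "odd m" "[a = b] (mod int m)" shows "jacobi a m = jacobi b m"
  using assms
proof (induction m rule: odd_prime_factors_induct)
  case (prime_mult p m)
  then have "[a = b] (mod int p)" "[a = b] (mod int m)"
    by (auto intro: cong_dvd_modulus)
  with prime_mult show ?case
    by (simp add: jacobi_mult_right jacobi_prime Legendre_cong prime_gt_0_nat odd_pos)
qed simp

lemma jacobi_minus_one:
  assumes "odd m" shows "jacobi (-1) m = chi4 (int m)"
  using assms
proof (induction m rule: odd_prime_factors_induct)
  case (prime_mult p m)
  then have "odd (int p)" "odd (int m)" by (auto simp: prime_odd_nat)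
  with prime_mult show ?case
    by (simp add: jacobi_mult_right jacobi_prime Legendre_minus_one chi4_mult
        prime_gt_0_nat odd_pos)
qed (simp add: chi4_def)

lemma jacobi_two:
  assumes "odd m" shows "jacobi 2 m = chi8 (int m)"
  using assms
proof (induction m rule: odd_prime_factors_induct)
  case (prime_mult p m)
  then have "odd (int p)" "odd (int m)" by (auto simp: prime_odd_nat)
  with prime_mult show ?case
    by (simp add: jacobi_mult_right jacobi_prime Legendre_two chi8_mult prime_gt_0_nat odd_pos)
qed (simp add: chi8_def)

lemma jacobi_unit:
  assumes "odd m" "coprime a (int m)" shows "jacobi a m \<in> {-1, 1}"
  using assms
proof (induction m rule: odd_prime_factors_induct)
  case (prime_mult p m)
  then have "coprime a (int p)" "coprime a (int m)" by simp_all
  moreover have "\<not> is_unit (int p)" using prime_gt_Suc_0_nat[OF prime_mult(1)] by simp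
  ultimately have "\<not> int p dvd a" by (meson coprime_common_divisor dvd_refl)
  then have "Legendre a (int p) \<in> {-1, 1}" by (auto simp: Legendre_def cong_0_iff)
  with prime_mult show ?case
    by (auto simp: jacobi_mult_right jacobi_prime prime_gt_0_nat odd_pos)
qed simp

text \<open>For odd \<open>m\<close> and \<open>n\<close> this is \<open>(-1) ^ ((m - 1) div 2 * ((n - 1) div 2))\<close>.\<close>

definition reciprocity_sign :: "int \<Rightarrow> int \<Rightarrow> int" where
  "reciprocity_sign m n = (if m mod 4 = 3 \<and> n mod 4 = 3 then -1 else 1)"

lemma reciprocity_sign_commute: "reciprocity_sign m n = reciprocity_sign n m"
  by (auto simp: reciprocity_sign_def)

lemma reciprocity_sign_mult:
  assumes "odd m" "odd m'"
  shows "reciprocity_sign (m * m') n = reciprocity_sign m n * reciprocity_sign m' n"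
proof -
  have "reciprocity_sign k n = (if n mod 4 = 3 then chi4 k else 1)" if "odd k" for k
    using that unfolding reciprocity_sign_def chi4_def by presburger
  then show ?thesis using assms chi4_mult by simp
qed

lemma jacobi_reciprocity_primes:
  assumes "prime p" "prime q" "p > 2" "q > 2" "p \<noteq> q"
  shows "jacobi (int p) q * jacobi (int q) p = reciprocity_sign (int p) (int q)"
proof -
  have "odd p" "odd q" using assms prime_odd_nat by auto
  then have "odd ((p - 1) div 2 * ((q - 1) div 2)) \<longleftrightarrow> int p mod 4 = 3 \<and> int q mod 4 = 3"
    by (simp add: even_mult_iff) presburger
  then have "(-1::int) ^ ((p - 1) div 2 * ((q - 1) div 2)) = reciprocity_sign (int p) (int q)"
    by (auto simp: reciprocity_sign_def minus_one_power_iff)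
  then show ?thesis
    using Quadratic_Reciprocity[OF assms(1,3,2,4,5)]
    by (simp add: jacobi_prime assms(1,2) mult.commute)
qed

lemma jacobi_reciprocity_prime:
  assumes "prime p" "p > 2" "odd n" "coprime p n"
  shows "jacobi (int p) n * jacobi (int n) p = reciprocity_sign (int p) (int n)"
  using assms(3,4)
proof (induction n rule: odd_prime_factors_induct)
  case one
  have "\<not> [1 = 0] (mod int p)" using assms by (auto simp: cong_0_iff)
  then show ?case
    using \<open>p > 2\<close> by (auto simp: jacobi_prime Legendre_def QuadRes_def reciprocity_sign_def)
next
  case (prime_mult q m)
  have "p \<noteq> q" "coprime p m" using prime_mult by (auto simp: coprime_absorb_left)
  have "odd p" using assms prime_odd_nat by auto
  have "jacobi (int p) (q * m) * jacobi (int (q * m)) p =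
        (jacobi (int p) q * jacobi (int q) p) * (jacobi (int p) m * jacobi (int m) p)"
    using prime_mult \<open>odd p\<close>
    by (simp add: jacobi_mult_right jacobi_mult_left prime_gt_0_nat odd_pos)
  also have "\<dots> = reciprocity_sign (int p) (int q) * reciprocity_sign (int p) (int m)"
    using jacobi_reciprocity_primes assms prime_mult \<open>p \<noteq> q\<close> \<open>coprime p m\<close> by simp
  also have "\<dots> = reciprocity_sign (int p) (int (q * m))"
    using prime_mult reciprocity_sign_mult[of "int q" "int m" "int p"]
    by (simp add: reciprocity_sign_commute prime_odd_nat)
  finally show ?case .
qed

lemma jacobi_reciprocity:
  assumes "odd m" "odd n" "coprime m n"
  shows "jacobi (int m) n * jacobi (int n) m = reciprocity_sign (int m) (int n)"
  using assms(1,3)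
proof (induction m rule: odd_prime_factors_induct)
  case one
  then show ?case by (simp add: reciprocity_sign_def)
next
  case (prime_mult p m)
  then have "coprime p n" "coprime m n" "odd p" by (auto simp: prime_odd_nat)
  have "jacobi (int (p * m)) n * jacobi (int n) (p * m) =
        (jacobi (int p) n * jacobi (int n) p) * (jacobi (int m) n * jacobi (int n) m)"
    using prime_mult assms(2)
    by (simp add: jacobi_mult_right jacobi_mult_left prime_gt_0_nat odd_pos)
  also have "\<dots> = reciprocity_sign (int p) (int n) * reciprocity_sign (int m) (int n)"
    using jacobi_reciprocity_prime prime_mult assms(2) \<open>coprime p n\<close> \<open>coprime m n\<close> by simp
  also have "\<dots> = reciprocity_sign (int (p * m)) (int n)"
    using reciprocity_sign_mult[of "int p" "int m" "int n"] prime_mult \<open>odd p\<close> by simp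
  finally show ?case .
qed

section \<open>The Kronecker symbol with odd lower argument\<close>

lemma chi8_abs: "chi8 \<bar>n\<bar> = chi8 n"
  unfolding chi8_def by (auto simp: abs_if zmod_zminus1_eq_if)

lemma jacobi_minus:
  assumes "odd m" shows "jacobi (- a) m = chi4 (int m) * jacobi a m"
  using jacobi_mult_left[OF assms, of "-1" a] jacobi_minus_one[OF assms] by simp

lemma jacobi_two_power:
  assumes "odd m" shows "jacobi (2 ^ e * a) m = chi8 (int m) ^ e * jacobi a m"
  by (induction e) (simp_all add: jacobi_mult_left[OF assms] jacobi_two[OF assms] mult.assoc)

lemma reciprocity_sign_abs:
  assumes "odd a" "odd n"
  shows "(if a < 0 then chi4 \<bar>n\<bar> else 1) * (if n < 0 then chi4 \<bar>a\<bar> else 1) *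
           reciprocity_sign \<bar>a\<bar> \<bar>n\<bar> =
         (if a < 0 \<and> n < 0 then -1 else 1) * reciprocity_sign a n"
proof -
  have mod4: "x mod 4 = 3 \<longleftrightarrow> x mod 4 \<noteq> 1" "(- x) mod 4 = (if x mod 4 = 1 then 3 else 1)"
    if "odd x" for x :: int
    using that by (auto simp: zmod_zminus1_eq_if) presburger+
  show ?thesis
    unfolding chi4_def reciprocity_sign_def abs_if
    by (cases "a < 0"; cases "n < 0"; cases "a mod 4 = 1"; cases "n mod 4 = 1")
      (simp_all add: mod4[OF assms(1)] mod4[OF assms(2)])
qed

lemma jacobi_reciprocity_int:
  fixes a n :: int
  assumes "odd a" "odd n" "coprime a n"
  shows "jacobi a (nat \<bar>n\<bar>) * jacobi n (nat \<bar>a\<bar>) =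
         (if a < 0 \<and> n < 0 then -1 else 1) * reciprocity_sign a n"
proof -
  have odd_abs: "odd (nat \<bar>a\<bar>)" "odd (nat \<bar>n\<bar>)" using assms by (simp_all add: even_nat_iff)
  have coprime_abs: "coprime (nat \<bar>a\<bar>) (nat \<bar>n\<bar>)"
    using assms(3) by (simp flip: coprime_int_iff)
  have sign_split: "jacobi x (nat \<bar>y\<bar>) = (if x < 0 then chi4 \<bar>y\<bar> else 1) * jacobi \<bar>x\<bar> (nat \<bar>y\<bar>)"
    if "odd (nat \<bar>y\<bar>)" for x y
    using jacobi_minus[OF that, of "\<bar>x\<bar>"] by (cases "x < 0") simp_all
  have "jacobi \<bar>a\<bar> (nat \<bar>n\<bar>) * jacobi \<bar>n\<bar> (nat \<bar>a\<bar>) = reciprocity_sign \<bar>a\<bar> \<bar>n\<bar>"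
    using jacobi_reciprocity[OF odd_abs coprime_abs] by simp
  moreover have "jacobi a (nat \<bar>n\<bar>) * jacobi n (nat \<bar>a\<bar>) =
      (if a < 0 then chi4 \<bar>n\<bar> else 1) * (if n < 0 then chi4 \<bar>a\<bar> else 1) *
      (jacobi \<bar>a\<bar> (nat \<bar>n\<bar>) * jacobi \<bar>n\<bar> (nat \<bar>a\<bar>))"
    unfolding sign_split[OF odd_abs(2), of a] sign_split[OF odd_abs(1), of n]
      by (simp only: mult_ac)
  ultimately show ?thesis
    using reciprocity_sign_abs[OF assms(1,2)] by simp
qed

lemma kronecker_one_right [simp]: "kronecker a 1 = 1"
  by (simp add: kronecker_def)

lemma kronecker_odd:
  assumes "odd n"
  shows "kronecker a n = (if n < 0 \<and> a \<le> 0 then -1 else 1) * jacobi a (nat \<bar>n\<bar>)"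
proof -
  have "odd (nat \<bar>n\<bar>)" "n \<noteq> 0" using assms by (auto simp: even_nat_iff)
  then have "p \<in> prime_factors (nat \<bar>n\<bar>) \<Longrightarrow> p \<noteq> 2" for p by auto
  then have "(\<Prod>p\<in>prime_factors (nat \<bar>n\<bar>).
        (if p = 2 then kron2 a else Legendre a (int p)) ^ multiplicity p (nat \<bar>n\<bar>)) =
      (\<Prod>p\<in>prime_factors (nat \<bar>n\<bar>). Legendre a (int p) ^ multiplicity p (nat \<bar>n\<bar>))"
    by (intro prod.cong) auto
  also have "\<dots> = jacobi a (nat \<bar>n\<bar>)"
    unfolding jacobi_def image_prod_mset_multiplicity
    by (intro prod.cong refl)
      (auto simp: count_prime_factorization_prime in_prime_factors_imp_prime)
  finally show ?thesis using \<open>n \<noteq> 0\<close> by (simp add: kronecker_def)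
qed

text \<open>Reciprocity moves \<open>n\<close> into the upper argument, where only its residues modulo \<open>b\<close>, 4
  and (if \<open>e \<ge> 3\<close>) 8 matter; this gives the periodicity below.\<close>

lemma kronecker_reciprocity:
  assumes "odd b" "odd n" "coprime b n"
  shows "kronecker (2 ^ e * b) n = reciprocity_sign b n * chi8 n ^ e * jacobi n (nat \<bar>b\<bar>)"
proof -
  define s where "s = (if b < 0 \<and> n < 0 then -1 else 1 :: int)"
  have odd_abs: "odd (nat \<bar>b\<bar>)" "odd (nat \<bar>n\<bar>)" using assms by (simp_all add: even_nat_iff)
  have "b \<noteq> 0" using assms(1) by auto
  then have "2 ^ e * b \<le> 0 \<longleftrightarrow> b < 0" by (auto simp: mult_le_0_iff)
  then have "kronecker (2 ^ e * b) n = s * chi8 n ^ e * jacobi b (nat \<bar>n\<bar>)"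
    using kronecker_odd[OF assms(2)] jacobi_two_power[OF odd_abs(2)] chi8_abs
    by (simp add: s_def conj_commute)
  moreover have "jacobi n (nat \<bar>b\<bar>) \<in> {-1, 1}"
    using jacobi_unit[OF odd_abs(1)] assms(3) by (simp add: coprime_commute)
  moreover have "jacobi b (nat \<bar>n\<bar>) * jacobi n (nat \<bar>b\<bar>) = s * reciprocity_sign b n"
    unfolding s_def by (rule jacobi_reciprocity_int[OF assms])
  ultimately show ?thesis by (auto simp: s_def)
qed

lemma kronecker_periodic:
  fixes A n k :: int
  assumes "4 dvd A" "odd n" "coprime A n"
  shows "kronecker A (n + k * A) = kronecker A n"
proof (cases "A = 0")
  case False
  define e where "e = multiplicity 2 A"
  obtain b where A: "A = 2 ^ e * b" and "odd b"
    using multiplicity_decompose'[of A 2] False by (auto simp: e_def)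
  have "e \<ge> 2" unfolding e_def using power_dvd_iff_le_multiplicity[of A 2 2] False assms(1) by simp
  define n' where "n' = n + k * A"
  have "odd n'" using assms(1,2) unfolding n'_def by auto
  have "coprime A n'"
    using assms(3) unfolding n'_def
    by (simp add: coprime_iff_gcd_eq_1 gcd_add_mult[of A k n, simplified add.commute] add.commute)
  then have cop: "coprime b n" "coprime b n'" using assms(3) unfolding A by simp_all
  have cong: "[n' = n] (mod d)" if "d dvd A" for d
    using that unfolding n'_def by (simp add: cong_iff_dvd_diff)
  have "n' mod 4 = n mod 4" using cong[OF assms(1)] by (simp add: cong_def)
  then have "reciprocity_sign b n' = reciprocity_sign b n" by (simp add: reciprocity_sign_def)
  moreover have "chi8 n' ^ e = chi8 n ^ e"
  proof (cases "e = 2")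
    case False
    with \<open>e \<ge> 2\<close> have "(8::int) dvd 2 ^ e" using le_imp_power_dvd[of 3 e "2::int"] by simp
    then have "n' mod 8 = n mod 8" using cong[of 8] unfolding A by (simp add: cong_def)
    then show ?thesis by (simp add: chi8_def)
  qed (simp add: chi8_def)
  moreover have "jacobi n' (nat \<bar>b\<bar>) = jacobi n (nat \<bar>b\<bar>)"
    using \<open>odd b\<close> cong[of "int (nat \<bar>b\<bar>)"] by (intro jacobi_cong) (auto simp: even_nat_iff A)
  ultimately have "kronecker (2 ^ e * b) n' = kronecker (2 ^ e * b) n"
    using kronecker_reciprocity[OF \<open>odd b\<close> assms(2) cop(1)]
      kronecker_reciprocity[OF \<open>odd b\<close> \<open>odd n'\<close> cop(2)]
    by simp
  then show ?thesis unfolding n'_def A .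
qed simp

section \<open>Kubota's cocycle\<close>

definition translation :: "int \<Rightarrow> mat2" where
  "translation b = (1, b, 0, 1)"

lemma m2mult_assoc: "m2mult (m2mult x y) z = m2mult x (m2mult y z)"
  by (cases x; cases y; cases z) (simp add: algebra_simps)

lemma cocycle_values: "cocycle g h \<in> {-1, 1}"
  by (simp add: cocycle_def hilbert_R_def)

lemma cocycle_eq:
  assumes "xfun g \<noteq> 0" "xfun h \<noteq> 0" "xfun (m2mult g h) \<noteq> 0"
  shows "cocycle g h =
    (if (xfun g > 0 \<and> xfun h > 0 \<and> xfun (m2mult g h) < 0) \<or>
        (xfun g < 0 \<and> xfun h < 0 \<and> xfun (m2mult g h) > 0) then -1 else 1)"
  using assms by (auto simp: cocycle_def hilbert_R_def mult_less_0_iff zero_less_mult_iff)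

lemma cocycle_translation_right: "cocycle g (translation b) = 1"
  by (cases g) (auto simp: cocycle_def hilbert_R_def translation_def)

lemma xfun_translation_right: "xfun (m2mult g (translation b)) = xfun g"
  by (cases g) (auto simp: translation_def)

text \<open>Right multiplication by \<open>\<omega>\<close> maps the bottom row \<open>(c, d)\<close> to \<open>(d, -c)\<close>, which turns the
  quadrants by one step; \<open>xfun\<close> is positive exactly on the quadrants 0 and 1.\<close>

definition row_quadrant :: "int \<Rightarrow> int \<Rightarrow> nat" where
  "row_quadrant c d =
    (if c \<ge> 0 \<and> d > 0 then 0 else if c > 0 \<and> d \<le> 0 then 1 else if c \<le> 0 \<and> d < 0 then 2 else 3)"

lemma xfun_sign_row_quadrant:
  assumes "(c, d) \<noteq> (0, 0)"
  shows "xfun (a, b, c, d) > 0 \<longleftrightarrow> row_quadrant c d \<in> {0, 1}"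
    "xfun (a, b, c, d) < 0 \<longleftrightarrow> row_quadrant c d \<in> {2, 3}"
    "xfun (m2mult (a, b, c, d) omega) > 0 \<longleftrightarrow> row_quadrant c d \<in> {0, 3}"
    "xfun (m2mult (a, b, c, d) omega) < 0 \<longleftrightarrow> row_quadrant c d \<in> {1, 2}"
  using assms by (auto simp: row_quadrant_def omega_def)

lemma row_quadrant_iff:
  assumes "(c, d) \<noteq> (0, 0)"
  shows "row_quadrant c d = 0 \<longleftrightarrow> c \<ge> 0 \<and> d > 0" "row_quadrant c d = 1 \<longleftrightarrow> c > 0 \<and> d \<le> 0"
    "row_quadrant c d = 2 \<longleftrightarrow> c \<le> 0 \<and> d < 0" "row_quadrant c d = 3 \<longleftrightarrow> c < 0 \<and> d \<ge> 0"
  using assms by (auto simp: row_quadrant_def)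

lemma row_quadrant_pred_orientation:
  fixes c d u v :: int
  assumes cd: "(c, d) \<noteq> (0, 0)" and uv: "(u, v) \<noteq> (0, 0)"
    and "row_quadrant u v = (row_quadrant c d + 3) mod 4"
  shows "u * d - v * c < 0"
proof -
  have "row_quadrant c d \<in> {0, 1, 2, 3}" by (auto simp: row_quadrant_def)
  with assms(3) consider
      "row_quadrant c d = 0" "row_quadrant u v = 3" | "row_quadrant c d = 1" "row_quadrant u v = 0"
    | "row_quadrant c d = 2" "row_quadrant u v = 1" | "row_quadrant c d = 3" "row_quadrant u v = 2"
    by auto
  then show ?thesis
  proof cases
    case 1
    then have "c \<ge> 0" "d > 0" "u < 0" "v \<ge> 0" using row_quadrant_iff[OF cd] row_quadrant_iff[OF uv]
      by auto
    then show ?thesis using mult_neg_pos[of u d] mult_nonneg_nonneg[of v c] by linarith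
  next
    case 2
    then have "c > 0" "d \<le> 0" "u \<ge> 0" "v > 0" using row_quadrant_iff[OF cd] row_quadrant_iff[OF uv]
      by auto
    then show ?thesis using mult_nonneg_nonpos[of u d] mult_pos_pos[of v c] by linarith
  next
    case 3
    then have "c \<le> 0" "d < 0" "u > 0" "v \<le> 0" using row_quadrant_iff[OF cd] row_quadrant_iff[OF uv]
      by auto
    then show ?thesis using mult_pos_neg[of u d] mult_nonpos_nonpos[of v c] by linarith
  next
    case 4
    then have "c < 0" "d \<ge> 0" "u \<le> 0" "v < 0" using row_quadrant_iff[OF cd] row_quadrant_iff[OF uv]
      by auto
    then show ?thesis using mult_nonpos_nonneg[of u d] mult_neg_neg[of v c] by linarith
  qed
qed

text \<open>The bottom row \<open>(r, s)\<close> of \<open>x\<close> is recovered from the bottom rows \<open>(c, d)\<close> of \<open>y\<close>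
  and \<open>(u, v)\<close> of \<open>x y\<close> as \<open>r = u d - v c\<close>; when the two rows lie in adjacent quadrants
  this fixes the sign of \<open>xfun x\<close>, and in all other cases both sides are independent of it.\<close>

lemma cocycle_assoc_omega:
  fixes p q r s a b c d :: int
  assumes "p * s - q * r = 1" "a * d - b * c = 1"
  defines "x \<equiv> (p, q, r, s)" and "y \<equiv> (a, b, c, d)"
  shows "cocycle x y * cocycle (m2mult x y) omega = cocycle x (m2mult y omega) * cocycle y omega"
proof -
  define u v where "u = r * a + s * c" and "v = r * b + s * d"
  have xy: "m2mult x y = (p * a + q * c, p * b + q * d, u, v)"
    by (simp add: x_def y_def u_def v_def)
  have "u * d - v * c = r * (a * d - b * c)" "v * a - u * b = s * (a * d - b * c)"
    unfolding u_def v_def by (simp_all add: algebra_simps)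
  then have r: "r = u * d - v * c" and s: "s = v * a - u * b" using assms(2) by simp_all
  have "(r, s) \<noteq> (0, 0)" using assms(1) by auto
  then have nz: "(r, s) \<noteq> (0, 0)" "(c, d) \<noteq> (0, 0)" "(u, v) \<noteq> (0, 0)"
    using assms(2) r s by auto
  have nonzero: "xfun x \<noteq> 0" "xfun y \<noteq> 0" "xfun (m2mult x y) \<noteq> 0" "xfun omega = 1"
    "xfun (m2mult y omega) \<noteq> 0" "xfun (m2mult x (m2mult y omega)) \<noteq> 0"
    using nz unfolding xy m2mult_assoc[symmetric] by (auto simp: x_def y_def omega_def)
  have C: "cocycle x y = (if (xfun x > 0 \<and> xfun y > 0 \<and> xfun (m2mult x y) < 0) \<or>
                 (xfun x < 0 \<and> xfun y < 0 \<and> xfun (m2mult x y) > 0) then -1 else 1)"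
    "cocycle (m2mult x y) omega =
       (if xfun (m2mult x y) > 0 \<and> xfun (m2mult (m2mult x y) omega) < 0 then -1 else 1)"
    "cocycle x (m2mult y omega) =
       (if (xfun x > 0 \<and> xfun (m2mult y omega) > 0 \<and> xfun (m2mult (m2mult x y) omega) < 0) \<or>
           (xfun x < 0 \<and> xfun (m2mult y omega) < 0 \<and> xfun (m2mult (m2mult x y) omega) > 0)
        then -1 else 1)"
    "cocycle y omega = (if xfun y > 0 \<and> xfun (m2mult y omega) < 0 then -1 else 1)"
    using cocycle_eq[OF nonzero(1-3)] cocycle_eq[OF nonzero(3), of omega]
      cocycle_eq[OF nonzero(1,5,6)] cocycle_eq[OF nonzero(2), of omega] nonzero(4-6)
    by (simp_all add: m2mult_assoc)
  note signs = xfun_sign_row_quadrant[OF nz(2), of a b, folded y_def]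
    xfun_sign_row_quadrant[OF nz(3), of "p * a + q * c" "p * b + q * d", folded xy]
  have "row_quadrant u v = (row_quadrant c d + 3) mod 4 \<Longrightarrow> xfun x < 0"
    using row_quadrant_pred_orientation[OF nz(2,3)] r by (auto simp: x_def)
  moreover have "row_quadrant c d = (row_quadrant u v + 3) mod 4 \<Longrightarrow> xfun x > 0"
    using row_quadrant_pred_orientation[OF nz(3,2)] r by (auto simp: x_def algebra_simps)
  moreover have "xfun x > 0 \<or> xfun x < 0" using \<open>xfun x \<noteq> 0\<close> by linarith
  moreover have
    "row_quadrant c d = 0 \<or> row_quadrant c d = 1 \<or> row_quadrant c d = 2 \<or> row_quadrant c d = 3"
    "row_quadrant u v = 0 \<or> row_quadrant u v = 1 \<or> row_quadrant u v = 2 \<or> row_quadrant u v = 3"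
    by (auto simp: row_quadrant_def)
  ultimately show ?thesis
    unfolding C signs by (elim disjE) simp_all
qed

section \<open>The theta multiplier on the metaplectic \<open>\<Gamma>\<^sub>\<theta>\<close>\<close>

lemma SL2_mod2_cases:
  fixes a b c d :: int
  assumes "a * d - b * c = 1"
  shows "(odd a \<and> even b \<and> even c \<and> odd d) \<or> (even a \<and> odd b \<and> odd c \<and> even d) \<or>
         (odd a \<and> odd b \<and> even c \<and> odd d) \<or> (even a \<and> odd b \<and> odd c \<and> odd d) \<or>
         (odd a \<and> even b \<and> odd c \<and> odd d) \<or> (odd a \<and> odd b \<and> odd c \<and> even d)"
proof -
  have "odd (a * d - b * c)" using assms by simp
  then show ?thesis by auto
qed

lemma Gamma_theta_mod2_iff:
  fixes a b c d :: int
  assumes "a * d - b * c = 1"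
  shows "even (a * c) \<and> even (b * d) \<longleftrightarrow>
         (odd a \<and> even b \<and> even c \<and> odd d) \<or> (even a \<and> odd b \<and> odd c \<and> even d)"
  using SL2_mod2_cases[OF assms] by auto

definition mp_Gamma_theta :: "(mat2 \<times> int) set" where
  "mp_Gamma_theta =
    {((a, b, c, d), e). a * d - b * c = 1 \<and> even (a * c) \<and> even (b * d) \<and> (e = 1 \<or> e = -1)}"

lemma mp_Gamma_theta_closed:
  assumes "x \<in> mp_Gamma_theta" "y \<in> mp_Gamma_theta"
  shows "mp_mult x y \<in> mp_Gamma_theta"
proof -
  obtain p q r s e1 a b c d e2 where x: "x = ((p, q, r, s), e1)" and y: "y = ((a, b, c, d), e2)"
    by (metis prod.collapse)
  have hx: "p * s - q * r = 1" "even (p * r)" "even (q * s)" "e1 = 1 \<or> e1 = -1"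
    and hy: "a * d - b * c = 1" "even (a * c)" "even (b * d)" "e2 = 1 \<or> e2 = -1"
    using assms x y by (auto simp: mp_Gamma_theta_def)
  have "(p * a + q * c) * (r * b + s * d) - (p * b + q * d) * (r * a + s * c) =
        (p * s - q * r) * (a * d - b * c)"
    by (simp add: algebra_simps)
  moreover have
    "even ((p * a + q * c) * (r * a + s * c)) \<and> even ((p * b + q * d) * (r * b + s * d))"
    using Gamma_theta_mod2_iff[OF hx(1)] Gamma_theta_mod2_iff[OF hy(1)] hx(2,3) hy(2,3) by auto
  moreover have "cocycle (p, q, r, s) (a, b, c, d) * e1 * e2 \<in> {-1, 1}"
    using cocycle_values[of "(p, q, r, s)" "(a, b, c, d)"] hx(4) hy(4) by auto
  ultimately show ?thesis using hx(1) hy(1) by (auto simp: x y mp_Gamma_theta_def)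
qed

lemma mp_mult_assoc_translation:
  "mp_mult (mp_mult x y) (translation b, 1) = mp_mult x (mp_mult y (translation b, 1))"
proof -
  obtain g1 e1 g2 e2 where x: "x = (g1, e1)" and y: "y = (g2, e2)" by fastforce
  have "cocycle g1 (m2mult g2 (translation b)) = cocycle g1 g2"
    unfolding cocycle_def xfun_translation_right m2mult_assoc[symmetric] ..
  then show ?thesis
    by (simp add: x y cocycle_translation_right m2mult_assoc)
qed

lemma mp_mult_assoc_omega:
  assumes "x \<in> mp_Gamma_theta" "y \<in> mp_Gamma_theta"
  shows "mp_mult (mp_mult x y) (omega, 1) = mp_mult x (mp_mult y (omega, 1))"
proof -
  obtain p q r s e1 a b c d e2 where x: "x = ((p, q, r, s), e1)" and y: "y = ((a, b, c, d), e2)"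
    by (metis prod.collapse)
  have "p * s - q * r = 1" "a * d - b * c = 1"
    using assms x y by (auto simp: mp_Gamma_theta_def)
  from cocycle_assoc_omega[OF this]
  have "cocycle (m2mult (p, q, r, s) (a, b, c, d)) omega *
          (cocycle (p, q, r, s) (a, b, c, d) * e1 * e2) =
        cocycle (p, q, r, s) (m2mult (a, b, c, d) omega) * e1 * (cocycle (a, b, c, d) omega * e2)"
    by (simp add: mult_ac)
  then show ?thesis
    by (simp only: x y mp_mult.simps m2mult_assoc) simp
qed

lemma SL2_coprime_bottom_row:
  fixes a b c d :: int
  assumes "a * d - b * c = 1" shows "coprime c d"
proof (rule coprimeI)
  fix k assume "k dvd c" "k dvd d"
  then have "k dvd a * d - b * c" by simp
  with assms show "is_unit k" by simp
qed

lemma eps_periodic: "4 dvd m \<Longrightarrow> eps (d + m) = eps d"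
  by (auto simp: eps_def)

text \<open>For odd \<open>c\<close> the sign conventions of the Kronecker symbol and of the Hilbert symbol
  cancel, leaving only the sign of \<open>c\<close>.\<close>

lemma theta_lambda_odd:
  assumes "odd c"
  shows "theta_lambda (a, b, c, d) =
           of_int (sgn c * jacobi (-2 * d) (nat \<bar>c\<bar>)) * inverse (eps c) * cis (-pi / 4)"
proof -
  have "kronecker (-2 * d) c * hilbert_R d c = sgn c * jacobi (-2 * d) (nat \<bar>c\<bar>)"
    using assms by (auto simp: kronecker_odd hilbert_R_def sgn_if)
  then have "of_int (kronecker (-2 * d) c) * of_int (hilbert_R d c) =
             (of_int (sgn c * jacobi (-2 * d) (nat \<bar>c\<bar>)) :: complex)"
    by (metis of_int_mult)
  then show ?thesis
    using assms by (simp add: omega_inv_def mult_ac)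
qed

lemma theta_lambda_translation:
  fixes a b c d :: int
  assumes "a * d - b * c = 1" "even (a * c)" "even (b * d)"
  shows "theta_lambda (m2mult (a, b, c, d) (translation (2 * k))) = theta_lambda (a, b, c, d)"
proof -
  have m: "m2mult (a, b, c, d) (translation (2 * k)) = (a, b + 2 * k * a, c, d + k * (2 * c))"
    by (simp add: translation_def algebra_simps)
  show ?thesis
  proof (cases "even c")
    case True
    then have "odd d" using Gamma_theta_mod2_iff[OF assms(1)] assms(2,3) by blast
    moreover have "coprime (2 * c) d"
      using SL2_coprime_bottom_row[OF assms(1)] \<open>odd d\<close> by simp
    ultimately have "kronecker (2 * c) (d + k * (2 * c)) = kronecker (2 * c) d"
      using True by (intro kronecker_periodic) auto
    moreover have "eps (d + k * (2 * c)) = eps d"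
      using True by (intro eps_periodic) auto
    ultimately show ?thesis unfolding m using True by simp
  next
    case False
    have "jacobi (-2 * (d + k * (2 * c))) (nat \<bar>c\<bar>) = jacobi (-2 * d) (nat \<bar>c\<bar>)"
      using False by (intro jacobi_cong) (auto simp: even_nat_iff cong_iff_dvd_diff algebra_simps)
    then show ?thesis unfolding m theta_lambda_odd[OF False] by simp
  qed
qed

lemma cis_minus_pi_quarter_squared: "cis (- pi / 4) * cis (- pi / 4) = - \<i>"
proof -
  have "cis (- pi / 4) * cis (- pi / 4) = cis (- pi / 2)" by (simp add: cis_mult)
  also have "\<dots> = - \<i>" by (simp add: complex_eq_iff)
  finally show ?thesis .
qed

lemma omega_sign_identity:
  assumes "odd c"
  shows "of_int (if c > 0 \<and> d \<le> 0 then -1 else 1) * inverse (eps (- c)) *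
           of_int (hilbert_R (- c) (if d = 0 then - c else d)) =
         of_int (sgn c * chi4 \<bar>c\<bar>) * inverse (eps c) * (cis (-pi / 4) * cis (-pi / 4))"
proof -
  have mod4: "c mod 4 = 1 \<longleftrightarrow> c mod 4 \<noteq> 3" "(- c) mod 4 = 1 \<longleftrightarrow> c mod 4 = 3"
    using assms by presburger+
  show ?thesis
    unfolding cis_minus_pi_quarter_squared eps_def chi4_def hilbert_R_def
    using assms by (cases "c > 0"; cases "c mod 4 = 3"; cases "d > 0"; cases "d = 0")
      (auto simp: mod4 sgn_if)
qed

lemma theta_lambda_omega:
  fixes a b c d :: int
  assumes "a * d - b * c = 1" "even (a * c)" "even (b * d)"
  shows "theta_lambda (m2mult (a, b, c, d) omega) * of_int (cocycle (a, b, c, d) omega) =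
         theta_lambda (a, b, c, d) * cis (-pi / 4)"
proof -
  have m: "m2mult (a, b, c, d) omega = (b, -a, d, -c)" by (simp add: omega_def)
  have coc: "cocycle (a, b, c, d) omega = hilbert_R (- xfun (a, b, c, d)) (xfun (b, -a, d, -c))"
    by (simp add: cocycle_def omega_def hilbert_R_def)
  show ?thesis
  proof (cases "even c")
    case True
    then have "odd d" using Gamma_theta_mod2_iff[OF assms(1)] assms(2,3) by blast
    then have "sgn d * hilbert_R (- xfun (a, b, c, d)) (xfun (b, -a, d, -c)) *
        jacobi (2 * c) (nat \<bar>d\<bar>) = kronecker (2 * c) d"
      by (auto simp: kronecker_odd hilbert_R_def sgn_if)
    then have "of_int (sgn d * jacobi (2 * c) (nat \<bar>d\<bar>)) * of_int (cocycle (a, b, c, d) omega) =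
               (of_int (kronecker (2 * c) d) :: complex)"
      unfolding coc by (metis of_int_mult mult.commute mult.left_commute)
    then show ?thesis
      unfolding m theta_lambda_odd[OF \<open>odd d\<close>] using True by (simp add: mult_ac)
  next
    case False
    then have "even d" using Gamma_theta_mod2_iff[OF assms(1)] assms(2,3) by blast
    have odd_abs: "odd (nat \<bar>c\<bar>)" using False by (simp add: even_nat_iff)
    have kron: "kronecker (2 * d) (- c) =
        (if c > 0 \<and> d \<le> 0 then -1 else 1) * jacobi (2 * d) (nat \<bar>c\<bar>)"
      using False by (simp add: kronecker_odd)
    have jac: "jacobi (-2 * d) (nat \<bar>c\<bar>) = chi4 \<bar>c\<bar> * jacobi (2 * d) (nat \<bar>c\<bar>)"
      using jacobi_minus[OF odd_abs, of "2 * d"] by simp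
    have "xfun (a, b, c, d) = c" "xfun (b, -a, d, -c) = (if d = 0 then - c else d)"
      using False by auto
    then have "theta_lambda (b, -a, d, -c) * of_int (cocycle (a, b, c, d) omega) =
        of_int (jacobi (2 * d) (nat \<bar>c\<bar>)) * (of_int (if c > 0 \<and> d \<le> 0 then -1 else 1) *
        inverse (eps (- c)) * of_int (hilbert_R (- c) (if d = 0 then - c else d)))"
      using \<open>even d\<close> unfolding coc theta_lambda.simps kron of_int_mult
        by (simp only: if_True mult_ac)
    also have "\<dots> = of_int (jacobi (2 * d) (nat \<bar>c\<bar>)) *
        (of_int (sgn c * chi4 \<bar>c\<bar>) * inverse (eps c) * (cis (-pi / 4) * cis (-pi / 4)))"
      by (simp only: omega_sign_identity[OF False])
    also have "\<dots> = theta_lambda (a, b, c, d) * cis (-pi / 4)"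
      unfolding theta_lambda_odd[OF False] jac by (simp add: mult_ac)
    finally show ?thesis unfolding m .
  qed
qed

fun mp_theta_lambda :: "mat2 \<times> int \<Rightarrow> complex" where
  "mp_theta_lambda (g, e) = theta_lambda g * of_int e"

lemma mp_theta_lambda_translation:
  assumes "x \<in> mp_Gamma_theta"
  shows "mp_theta_lambda (mp_mult x (translation (2 * k), 1)) = mp_theta_lambda x"
proof -
  obtain a b c d e where x: "x = ((a, b, c, d), e)" by (metis prod.collapse)
  have "a * d - b * c = 1" "even (a * c)" "even (b * d)"
    using assms x by (auto simp: mp_Gamma_theta_def)
  from theta_lambda_translation[OF this] show ?thesis
    by (simp add: x cocycle_translation_right)
qed

lemma mp_theta_lambda_omega:
  assumes "x \<in> mp_Gamma_theta"
  shows "mp_theta_lambda (mp_mult x (omega, 1)) = mp_theta_lambda x * cis (-pi / 4)"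
proof -
  obtain a b c d e where x: "x = ((a, b, c, d), e)" by (metis prod.collapse)
  have "a * d - b * c = 1" "even (a * c)" "even (b * d)"
    using assms x by (auto simp: mp_Gamma_theta_def)
  from theta_lambda_omega[OF this] show ?thesis
    by (simp add: x mult_ac)
qed

lemma eps_one [simp]: "eps 1 = 1"
  by (simp add: eps_def)

lemma omega_in_mp_Gamma_theta: "(omega, 1) \<in> mp_Gamma_theta"
  by (simp add: omega_def mp_Gamma_theta_def)

lemma mp_theta_lambda_mult_translation:
  assumes "y \<in> mp_Gamma_theta"
    and "\<forall>x\<in>mp_Gamma_theta. mp_theta_lambda (mp_mult x y) = mp_theta_lambda x * mp_theta_lambda y"
  shows "\<forall>x\<in>mp_Gamma_theta. mp_theta_lambda (mp_mult x (mp_mult y (translation (2 * k), 1))) =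
           mp_theta_lambda x * mp_theta_lambda (mp_mult y (translation (2 * k), 1))"
  using assms mp_Gamma_theta_closed
  by (simp add: mp_mult_assoc_translation[symmetric] mp_theta_lambda_translation)

lemma mp_theta_lambda_mult_omega:
  assumes "y \<in> mp_Gamma_theta"
    and "\<forall>x\<in>mp_Gamma_theta. mp_theta_lambda (mp_mult x y) = mp_theta_lambda x * mp_theta_lambda y"
  shows "\<forall>x\<in>mp_Gamma_theta. mp_theta_lambda (mp_mult x (mp_mult y (omega, 1))) =
           mp_theta_lambda x * mp_theta_lambda (mp_mult y (omega, 1))"
  using assms mp_Gamma_theta_closed
  by (simp add: mp_mult_assoc_omega[symmetric] mp_theta_lambda_omega mult_ac)

lemma mp_theta_lambda_mult_identity:
  "mp_theta_lambda (mp_mult x ((1, 0, 0, 1), e)) =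
     mp_theta_lambda x * mp_theta_lambda ((1, 0, 0, 1), e)"
proof -
  obtain a b c d e' where x: "x = ((a, b, c, d), e')" by (metis prod.collapse)
  have "cocycle (a, b, c, d) (1, 0, 0, 1) = 1" by (auto simp: cocycle_def hilbert_R_def)
  then show ?thesis by (simp add: x)
qed

lemma mp_mult_cocycle_cancel:
  assumes "e \<in> {-1, 1}"
  shows "mp_mult (g, e * cocycle g t) (t, 1) = (m2mult g t, e)"
  using assms cocycle_values[of g t] by auto

lemma mp_theta_lambda_mult_upper_triangular:
  assumes "((a, b, 0, d), e) \<in> mp_Gamma_theta"
  shows "\<forall>x\<in>mp_Gamma_theta. mp_theta_lambda (mp_mult x ((a, b, 0, d), e)) =
           mp_theta_lambda x * mp_theta_lambda ((a, b, 0, d), e)"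
proof -
  have unipotent: "\<forall>x\<in>mp_Gamma_theta. mp_theta_lambda (mp_mult x ((1, b', 0, 1), e')) =
                     mp_theta_lambda x * mp_theta_lambda ((1, b', 0, 1), e')"
    if "((1, b', 0, 1), e') \<in> mp_Gamma_theta" for b' e'
  proof -
    have "even b'" "e' \<in> {-1, 1}" using that by (auto simp: mp_Gamma_theta_def)
    then have "mp_mult ((1, 0, 0, 1), e') (translation (2 * (b' div 2)), 1) = ((1, b', 0, 1), e')"
      using cocycle_translation_right[of "(1, 0, 0, 1)" "2 * (b' div 2)"]
        by (simp add: translation_def)
    moreover have "((1, 0, 0, 1), e') \<in> mp_Gamma_theta"
      using \<open>e' \<in> {-1, 1}\<close> by (auto simp: mp_Gamma_theta_def)
    ultimately show ?thesis
      using mp_theta_lambda_mult_translation mp_theta_lambda_mult_identity by metis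
  qed
  have "a * d = 1" and e: "e \<in> {-1, 1}" and "even (b * d)" using assms
    by (auto simp: mp_Gamma_theta_def)
  then consider "a = 1" "d = 1" | "a = -1" "d = -1" "even b" using zmult_eq_1_iff by fastforce
  then show ?thesis
  proof cases
    case 1
    then show ?thesis using unipotent assms by simp
  next
    case 2
    txt \<open>\<open>(-1, b; 0, -1) = (1, -b; 0, 1) \<omega>\<^sup>2\<close>\<close>
    define e1 e2 where "e1 = e * cocycle (-b, -1, 1, 0) omega"
      and "e2 = e1 * cocycle (1, -b, 0, 1) omega"
    have e1: "e1 \<in> {-1, 1}" using e cocycle_values[of "(-b, -1, 1, 0)" omega] by (auto simp: e1_def)
    then have e12: "e1 \<in> {-1, 1}" "e2 \<in> {-1, 1}"
      using cocycle_values[of "(1, -b, 0, 1)" omega] by (auto simp: e2_def)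
    have m: "m2mult (1, -b, 0, 1) omega = (-b, -1, 1, 0)"
      "m2mult (-b, -1, 1, 0) omega = (a, b, 0, d)"
      using 2 by (simp_all add: omega_def)
    have "mp_mult ((1, -b, 0, 1), e2) (omega, 1) = ((-b, -1, 1, 0), e1)"
      unfolding e2_def mp_mult_cocycle_cancel[OF e12(1)] m(1) ..
    moreover have "mp_mult ((-b, -1, 1, 0), e1) (omega, 1) = ((a, b, 0, d), e)"
      unfolding e1_def mp_mult_cocycle_cancel[OF e] m(2) ..
    moreover have "((1, -b, 0, 1), e2) \<in> mp_Gamma_theta" "((-b, -1, 1, 0), e1) \<in> mp_Gamma_theta"
      using e12 \<open>even b\<close> by (auto simp: mp_Gamma_theta_def)
    ultimately show ?thesis
      using unipotent mp_theta_lambda_mult_omega mp_Gamma_theta_closed omega_in_mp_Gamma_theta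
      by metis
  qed
qed

lemma small_residue_mod_double:
  fixes c d :: int
  assumes "c \<noteq> 0" "odd (c + d)"
  obtains k where "\<bar>d - 2 * k * c\<bar> < \<bar>c\<bar>"
proof -
  define q r where "q = (d + \<bar>c\<bar>) div (2 * \<bar>c\<bar>)" and "r = (d + \<bar>c\<bar>) mod (2 * \<bar>c\<bar>)"
  have qr: "d + \<bar>c\<bar> = 2 * \<bar>c\<bar> * q + r" "0 \<le> r" "r < 2 * \<bar>c\<bar>"
    using assms(1) unfolding q_def r_def by simp_all
  have "odd r"
  proof -
    have "r = (c + d) + (\<bar>c\<bar> - c) - 2 * (\<bar>c\<bar> * q)" using qr(1) by simp
    moreover have "even (\<bar>c\<bar> - c)" by (simp add: abs_if)
    ultimately show ?thesis using assms(2) by (metis even_add even_diff dvd_triv_left)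
  qed
  then have "r \<noteq> 0" by auto
  moreover have "2 * (q * sgn c) * c = 2 * \<bar>c\<bar> * q" by (simp add: sgn_if)
  then have "d - 2 * (q * sgn c) * c = r - \<bar>c\<bar>" using qr(1) by linarith
  ultimately have "\<bar>d - 2 * (q * sgn c) * c\<bar> < \<bar>c\<bar>" using qr(2,3) by (auto simp: abs_less_iff)
  then show ?thesis by (rule that)
qed

lemma mp_Gamma_theta_reduction:
  assumes y: "((a, b, c, d), e) \<in> mp_Gamma_theta" and "c \<noteq> 0"
  obtains a' b' c' d' e' k where "((a', b', c', d'), e') \<in> mp_Gamma_theta" "\<bar>c'\<bar> < \<bar>c\<bar>"
    "mp_mult (mp_mult ((a', b', c', d'), e') (omega, 1)) (translation (2 * k), 1) =
       ((a, b, c, d), e)"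
proof -
  have det: "a * d - b * c = 1" and par: "even (a * c)" "even (b * d)" and e: "e \<in> {-1, 1}"
    using y by (auto simp: mp_Gamma_theta_def)
  have "odd (c + d)" using Gamma_theta_mod2_iff[OF det] par by auto
  then obtain k where k: "\<bar>d - 2 * k * c\<bar> < \<bar>c\<bar>" using small_residue_mod_double \<open>c \<noteq> 0\<close> by blast
  define b1 d1 where "b1 = b - 2 * k * a" and "d1 = d - 2 * k * c"
  define e1 e2 where "e1 = e * cocycle (a, b1, c, d1) (translation (2 * k))"
    and "e2 = e1 * cocycle (-b1, a, -d1, c) omega"
  have e1: "e1 \<in> {-1, 1}" using e cocycle_values[of "(a, b1, c, d1)" "translation (2 * k)"]
    by (auto simp: e1_def)
  have "mp_mult ((-b1, a, -d1, c), e2) (omega, 1) = ((a, b1, c, d1), e1)"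
    unfolding e2_def mp_mult_cocycle_cancel[OF e1] by (simp add: omega_def)
  moreover have "mp_mult ((a, b1, c, d1), e1) (translation (2 * k), 1) = ((a, b, c, d), e)"
    unfolding e1_def mp_mult_cocycle_cancel[OF e]
    by (simp add: translation_def b1_def d1_def algebra_simps)
  moreover have "((-b1, a, -d1, c), e2) \<in> mp_Gamma_theta"
  proof -
    have "(-b1) * c - a * (-d1) = 1" using det by (simp add: b1_def d1_def algebra_simps)
    moreover have "even (b1 * d1)" using par by (simp add: b1_def d1_def algebra_simps)
    moreover have "e2 \<in> {-1, 1}" using e1 cocycle_values[of "(-b1, a, -d1, c)" omega]
      by (auto simp: e2_def)
    ultimately show ?thesis using par by (auto simp: mp_Gamma_theta_def mult.commute)
  qed
  ultimately show ?thesis using that k by (simp add: d1_def)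
qed

theorem mp_theta_lambda_mult:
  assumes "x \<in> mp_Gamma_theta" "y \<in> mp_Gamma_theta"
  shows "mp_theta_lambda (mp_mult x y) = mp_theta_lambda x * mp_theta_lambda y"
proof -
  have "\<forall>x\<in>mp_Gamma_theta. mp_theta_lambda (mp_mult x ((a, b, c, d), e)) =
          mp_theta_lambda x * mp_theta_lambda ((a, b, c, d), e)"
    if "((a, b, c, d), e) \<in> mp_Gamma_theta" for a b c d e
    using that
  proof (induction "nat \<bar>c\<bar>" arbitrary: a b c d e rule: less_induct)
    case less
    show ?case
    proof (cases "c = 0")
      case True
      then show ?thesis using mp_theta_lambda_mult_upper_triangular less.prems by simp
    next
      case False
      obtain a' b' c' d' e' k where y': "((a', b', c', d'), e') \<in> mp_Gamma_theta" "\<bar>c'\<bar> < \<bar>c\<bar>"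
        "mp_mult (mp_mult ((a', b', c', d'), e') (omega, 1)) (translation (2 * k), 1) =
           ((a, b, c, d), e)"
        using mp_Gamma_theta_reduction[OF less.prems False] by blast
      have "nat \<bar>c'\<bar> < nat \<bar>c\<bar>" using y'(2) by simp
      from less.hyps[OF this y'(1)] show ?thesis
        using mp_theta_lambda_mult_omega mp_theta_lambda_mult_translation y'
          mp_Gamma_theta_closed omega_in_mp_Gamma_theta by metis
    qed
  qed
  then show ?thesis using assms by (metis prod.collapse)
qed

section \<open>The induced representation\<close>

lemma ind_space_mult:
  "F \<in> ind_space G mul H \<sigma> \<Longrightarrow> h \<in> H \<Longrightarrow> g \<in> G \<Longrightarrow> F (mul h g) = \<sigma> h * F g"
  by (simp add: ind_space_def)

lemma ind_space_outside: "F \<in> ind_space G mul H \<sigma> \<Longrightarrow> x \<notin> G \<Longrightarrow> F x = 0"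
  by (simp add: ind_space_def)

lemma ind_space_eqI:
  assumes F: "F \<in> ind_space G mul H \<sigma>" and F': "F' \<in> ind_space G mul H \<sigma>"
    and reps: "\<And>x. x \<in> G \<Longrightarrow> \<exists>h\<in>H. \<exists>r\<in>R. x = mul h r" "R \<subseteq> G"
    and eq: "\<And>r. r \<in> R \<Longrightarrow> F r = F' r"
  shows "F = F'"
proof
  fix x
  show "F x = F' x"
  proof (cases "x \<in> G")
    case True
    then obtain h r where "h \<in> H" "r \<in> R" "x = mul h r" using reps(1) by blast
    then show ?thesis using ind_space_mult[OF F] ind_space_mult[OF F'] eq reps(2) by auto
  qed (simp add: ind_space_outside[OF F] ind_space_outside[OF F'])
qed

lemma invariant_subspace_lincomb:
  assumes "invariant_subspace G mul V W" "F \<in> W" "F' \<in> W"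
  shows "(\<lambda>x. a * F x + b * F' x) \<in> W"
proof -
  have "(\<lambda>x. a * F x) \<in> W" "(\<lambda>x. b * F' x) \<in> W"
    using assms unfolding invariant_subspace_def by blast+
  moreover have "\<And>f f'. f \<in> W \<Longrightarrow> f' \<in> W \<Longrightarrow> (\<lambda>x. f x + f' x) \<in> W"
    using assms(1) unfolding invariant_subspace_def by blast
  ultimately show ?thesis by simp
qed

lemma invariant_subspace_right_transl:
  "invariant_subspace G mul V W \<Longrightarrow> g \<in> G \<Longrightarrow> F \<in> W \<Longrightarrow> right_transl G mul g F \<in> W"
  unfolding invariant_subspace_def by blast

lemma dirichlet_character_periodic:
  assumes "dirichlet_character N \<chi>"
  shows "\<chi> (n + k * int N) = \<chi> n"
proof -
  have period: "\<chi> (m + int N) = \<chi> m" for m using assms by (simp add: dirichlet_character_def)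
  show ?thesis
  proof (induction k arbitrary: n rule: int_induct[where k = 0])
    case (step1 i)
    then show ?case using period[of "n + i * int N"] by (simp add: algebra_simps)
  next
    case (step2 i)
    then show ?case using period[of "n + (i - 1) * int N"] by (simp add: algebra_simps)
  qed simp
qed

lemma mp_Gamma0_closed:
  assumes "x \<in> mp_Gamma0 M" "y \<in> mp_Gamma0 M"
  shows "mp_mult x y \<in> mp_Gamma0 M"
proof -
  obtain p q r s e1 a b c d e2 where x: "x = ((p, q, r, s), e1)" and y: "y = ((a, b, c, d), e2)"
    by (metis prod.collapse)
  have hx: "p * s - q * r = 1" "int M dvd r" "e1 = 1 \<or> e1 = -1"
    and hy: "a * d - b * c = 1" "int M dvd c" "e2 = 1 \<or> e2 = -1"
    using assms x y by (auto simp: mp_Gamma0_def)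
  have "(p * a + q * c) * (r * b + s * d) - (p * b + q * d) * (r * a + s * c) =
        (p * s - q * r) * (a * d - b * c)"
    by (simp add: algebra_simps)
  moreover have "cocycle (p, q, r, s) (a, b, c, d) * e1 * e2 \<in> {-1, 1}"
    using cocycle_values[of "(p, q, r, s)" "(a, b, c, d)"] hx(3) hy(3) by auto
  ultimately show ?thesis using hx hy by (auto simp: x y mp_Gamma0_def)
qed

lemma mp_Gamma_theta0_eq: "mp_Gamma_theta0 M = mp_Gamma0 M \<inter> mp_Gamma_theta"
  by (auto simp: mp_Gamma_theta0_def mp_Gamma0_def mp_Gamma_theta_def)

lemma mp_Gamma_theta0_closed:
  "x \<in> mp_Gamma_theta0 M \<Longrightarrow> y \<in> mp_Gamma_theta0 M \<Longrightarrow> mp_mult x y \<in> mp_Gamma_theta0 M"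
  by (simp add: mp_Gamma_theta0_eq mp_Gamma0_closed mp_Gamma_theta_closed)

lemma lambda_bar_mult:
  assumes "dirichlet_character N \<chi>" "N dvd M"
    and "x \<in> mp_Gamma_theta0 M" "y \<in> mp_Gamma_theta0 M"
  shows "lambda_bar \<chi> (mp_mult x y) = lambda_bar \<chi> x * lambda_bar \<chi> y"
proof -
  obtain p q r s e1 a b c d e2 where x: "x = ((p, q, r, s), e1)" and y: "y = ((a, b, c, d), e2)"
    by (metis prod.collapse)
  have "int N dvd r" using assms(2,3) x by (auto simp: mp_Gamma_theta0_def mp_Gamma0_def dvd_trans)
  then obtain t where "r * b = t * int N" by (metis dvd_def dvd_mult2 mult.commute)
  then have "\<chi> (r * b + s * d) = \<chi> s * \<chi> d"
    using dirichlet_character_periodic[OF assms(1), of "s * d" t] assms(1)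
    by (simp add: dirichlet_character_def add.commute)
  moreover have "mp_theta_lambda (mp_mult x y) = mp_theta_lambda x * mp_theta_lambda y"
    using assms(3,4) by (simp add: mp_Gamma_theta0_eq mp_theta_lambda_mult)
  moreover have "lambda_bar \<chi> (mp_mult x y) = mp_theta_lambda (mp_mult x y) * \<chi> (r * b + s * d)"
    "lambda_bar \<chi> x = mp_theta_lambda x * \<chi> s" "lambda_bar \<chi> y = mp_theta_lambda y * \<chi> d"
    by (simp_all add: x y mult_ac del: theta_lambda.simps)
  ultimately show ?thesis by (simp add: mult_ac del: theta_lambda.simps mp_theta_lambda.simps)
qed

text \<open>The right coset \<open>\<Gamma>\<^sub>\<theta> g\<close> of \<open>g \<in> SL\<^sub>2(\<int>)\<close> is determined by which column of \<open>g\<close>, if any,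
  is \<open>\<equiv> (1, 1) (mod 2)\<close>.\<close>

fun theta_coset :: "mat2 \<Rightarrow> nat" where
  "theta_coset (a, b, c, d) = (if odd b \<and> odd d then 1 else if odd a \<and> odd c then 2 else 0)"

lemma theta_coset_values: "theta_coset g \<in> {0, 1, 2}"
  by (cases g) auto

lemma theta_coset_eq_0_iff:
  fixes a b c d :: int
  assumes "a * d - b * c = 1"
  shows "theta_coset (a, b, c, d) = 0 \<longleftrightarrow> even (a * c) \<and> even (b * d)"
  using SL2_mod2_cases[OF assms] by auto

lemma theta_coset_mult_left:
  fixes p q r s a b c d :: int
  assumes "p * s - q * r = 1" "even (p * r)" "even (q * s)" "a * d - b * c = 1"
  shows "theta_coset (m2mult (p, q, r, s) (a, b, c, d)) = theta_coset (a, b, c, d)"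
proof -
  have "(odd p \<and> even q \<and> even r \<and> odd s) \<or> (even p \<and> odd q \<and> odd r \<and> even s)"
    using Gamma_theta_mod2_iff[OF assms(1)] assms(2,3) by blast
  with SL2_mod2_cases[OF assms(4)] show ?thesis by (elim disjE conjE) simp_all
qed

locale theta_induced =
  fixes N :: nat and \<chi> :: "int \<Rightarrow> complex"
  assumes odd_N: "odd N" and dirichlet: "dirichlet_character N \<chi>"
begin

abbreviation "M \<equiv> int N ^ 2"
abbreviation "G \<equiv> mp_Gamma0 (N ^ 2)"
abbreviation "H \<equiv> mp_Gamma_theta0 (N ^ 2)"
abbreviation "\<sigma> \<equiv> \<lambda>h. inverse (lambda_bar \<chi> h)"
abbreviation "V \<equiv> ind_space G mp_mult H \<sigma>"

lemma M_odd: "odd M" and M_pos: "M > 0"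
  using odd_N by (auto simp: odd_pos)

lemma G_iff: "((a, b, c, d), e) \<in> G \<longleftrightarrow> a * d - b * c = 1 \<and> M dvd c \<and> (e = 1 \<or> e = -1)"
  by (simp add: mp_Gamma0_def)

lemma H_iff: "((a, b, c, d), e) \<in> H \<longleftrightarrow>
    a * d - b * c = 1 \<and> M dvd c \<and> (e = 1 \<or> e = -1) \<and> even (a * c) \<and> even (b * d)"
  by (auto simp: mp_Gamma_theta0_def mp_Gamma0_def)

lemma H_subset_G: "H \<subseteq> G"
  by (auto simp: mp_Gamma_theta0_def)

lemma H_iff_theta_coset: "x \<in> H \<longleftrightarrow> x \<in> G \<and> theta_coset (fst x) = 0"
  by (cases x) (auto simp: H_iff G_iff theta_coset_eq_0_iff simp del: theta_coset.simps)

lemma theta_coset_mult_H: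
  assumes "h \<in> H" "g \<in> G" shows "theta_coset (fst (mp_mult h g)) = theta_coset (fst g)"
proof -
  obtain p q r s e1 a b c d e2 where h: "h = ((p, q, r, s), e1)" and g: "g = ((a, b, c, d), e2)"
    by (metis prod.collapse)
  show ?thesis
    using assms theta_coset_mult_left[of p s q r a d b c] by (simp add: h g H_iff G_iff)
qed

lemma sigma_mult: "x \<in> H \<Longrightarrow> y \<in> H \<Longrightarrow> \<sigma> (mp_mult x y) = \<sigma> x * \<sigma> y"
  using lambda_bar_mult[OF dirichlet, of "N ^ 2"] by simp

definition ind_vector :: "mat2 \<times> int \<Rightarrow> complex" where
  "ind_vector x = (if x \<in> H then \<sigma> x else 0)"

lemma ind_vector_in_V: "ind_vector \<in> V"
  unfolding ind_space_def
proof (intro CollectI conjI allI impI ballI)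
  fix x assume "x \<notin> G" then show "ind_vector x = 0" using H_subset_G ind_vector_def by auto
next
  fix h g assume h: "h \<in> H" and g: "g \<in> G"
  show "ind_vector (mp_mult h g) = \<sigma> h * ind_vector g"
  proof (cases "g \<in> H")
    case True
    then show ?thesis using mp_Gamma_theta0_closed[OF h True] sigma_mult[OF h True]
      by (simp add: ind_vector_def)
  next
    case False
    then have "mp_mult h g \<notin> H" using theta_coset_mult_H[OF h g] g H_iff_theta_coset by simp
    then show ?thesis using False by (simp add: ind_vector_def)
  qed
qed

lemma V_nonzero: "V \<noteq> {\<lambda>_. 0}"
proof -
  have "ind_vector ((1, 0, 0, 1), 1) = 1"
    using dirichlet by (simp add: ind_vector_def H_iff dirichlet_character_def)
  then have "ind_vector \<noteq> (\<lambda>_. 0)" by auto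
  then show ?thesis using ind_vector_in_V by blast
qed

definition coset_rep :: "nat \<Rightarrow> mat2 \<times> int" where
  "coset_rep i = (if i = 1 then translation 1 else if i = 2 then (1, 0, M, 1) else (1, 0, 0, 1), 1)"

lemma coset_rep_in_G: "coset_rep i \<in> G"
  by (simp add: coset_rep_def translation_def G_iff)

lemma G_decomp:
  assumes "x \<in> G"
  shows "\<exists>h\<in>H. x = mp_mult h (coset_rep (theta_coset (fst x)))"
proof -
  obtain a b c d e where x: "x = ((a, b, c, d), e)" by (metis prod.collapse)
  have det: "a * d - b * c = 1" and "M dvd c" and e: "e \<in> {-1, 1}"
    using assms by (auto simp: x G_iff)
  define r where "r = fst (coset_rep (theta_coset (a, b, c, d)))"
  have reduce: "\<exists>h\<in>H. x = mp_mult h (coset_rep (theta_coset (fst x)))"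
    if "m2mult (a', b', c', d') r = (a, b, c, d)" "((a', b', c', d'), 1) \<in> H" for a' b' c' d'
  proof
    show "((a', b', c', d'), e * cocycle (a', b', c', d') r) \<in> H"
      using that(2) e cocycle_values[of "(a', b', c', d')" r] by (auto simp: H_iff)
    show "x = mp_mult ((a', b', c', d'), e * cocycle (a', b', c', d') r)
                (coset_rep (theta_coset (fst x)))"
      using mp_mult_cocycle_cancel[OF e] that(1) by (simp add: x r_def coset_rep_def)
  qed
  have "theta_coset (a, b, c, d) \<in> {0, 1, 2}" by (rule theta_coset_values)
  then consider "theta_coset (a, b, c, d) = 0" | "theta_coset (a, b, c, d) = 1"
    | "theta_coset (a, b, c, d) = 2"
    by (auto simp del: theta_coset.simps)
  then show ?thesis
  proof cases
    case 1
    then show ?thesis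
      using reduce[of a b c d] det \<open>M dvd c\<close> theta_coset_eq_0_iff[OF det]
      by (simp add: r_def coset_rep_def H_iff del: theta_coset.simps)
  next
    case 2
    have "a * (d - c) - (b - a) * c = 1" using det by (simp add: algebra_simps)
    moreover have "even (a * c) \<and> even ((b - a) * (d - c))"
      using 2 SL2_mod2_cases[OF det] by auto
    ultimately show ?thesis
      using reduce[of a "b - a" c "d - c"] 2 \<open>M dvd c\<close>
      by (simp add: r_def coset_rep_def translation_def H_iff del: theta_coset.simps)
  next
    case 3
    have "(a - b * M) * d - b * (c - d * M) = 1" using det by (simp add: algebra_simps)
    moreover have "even ((a - b * M) * (c - d * M)) \<and> even (b * d)"
      using 3 SL2_mod2_cases[OF det] M_odd by auto
    ultimately show ?thesis
      using reduce[of "a - b * M" b "c - d * M" d] 3 \<open>M dvd c\<close>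
      by (simp add: r_def coset_rep_def H_iff algebra_simps del: theta_coset.simps)
  qed
qed

lemma V_eqI:
  assumes "F \<in> V" "F' \<in> V" "\<And>i. i \<in> {0, 1, 2} \<Longrightarrow> F (coset_rep i) = F' (coset_rep i)"
  shows "F = F'"
proof (rule ind_space_eqI[OF assms(1,2)])
  show "\<exists>h\<in>H. \<exists>r\<in>coset_rep ` {0, 1, 2}. x = mp_mult h r" if "x \<in> G" for x
    using G_decomp[OF that] theta_coset_values by blast
qed (use coset_rep_in_G assms(3) in auto)

lemma V_vanish:
  assumes "F \<in> V" "x \<in> G" "F (coset_rep (theta_coset (fst x))) = 0"
  shows "F x = 0"
proof -
  obtain h where "h \<in> H" "x = mp_mult h (coset_rep (theta_coset (fst x)))"
    using G_decomp[OF assms(2)] by blast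
  then show ?thesis
    using ind_space_mult[OF assms(1) \<open>h \<in> H\<close> coset_rep_in_G] assms(3) by (metis mult_zero_right)
qed

text \<open>\<open>T2_conj\<close> and \<open>L2_conj\<close> are the conjugates \<open>L T\<^sup>2 L\<^sup>-\<^sup>1\<close> and \<open>T L\<^sup>2 T\<^sup>-\<^sup>1\<close> by the
  coset representatives \<open>T = coset_rep 1\<close> and \<open>L = coset_rep 2\<close>.\<close>

definition "T2 = (translation 2, 1)"
definition "L2 = ((1, 0, 2 * M, 1), 1)"
definition "T2_conj = ((1 - 2 * M, 2, - 2 * M * M, 1 + 2 * M), 1)"
definition "L2_conj = ((1 + 2 * M, - 2 * M, 2 * M, 1 - 2 * M), 1)"
definition "T_inv = (translation (-1), 1)"
definition "L_inv = ((1, 0, - M, 1), 1)"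

lemma special_elements_in_G: "T2 \<in> G" "L2 \<in> G" "T_inv \<in> G" "L_inv \<in> G"
  by (simp_all add: T2_def L2_def T_inv_def L_inv_def translation_def G_iff)

lemma special_elements_in_H: "T2 \<in> H" "L2 \<in> H" "T2_conj \<in> H" "L2_conj \<in> H"
proof -
  have "(1 - 2 * M) * (1 + 2 * M) - 2 * (- 2 * M * M) = 1"
    "(1 + 2 * M) * (1 - 2 * M) - (- 2 * M) * (2 * M) = 1"
    by (simp_all add: algebra_simps)
  then show "T2 \<in> H" "L2 \<in> H" "T2_conj \<in> H" "L2_conj \<in> H"
    by (simp_all add: T2_def L2_def T2_conj_def L2_conj_def translation_def H_iff)
qed

lemma coset_rep_relations:
  "mp_mult (coset_rep 0) T2 = mp_mult T2 (coset_rep 0)"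
  "mp_mult (coset_rep 1) T2 = mp_mult T2 (coset_rep 1)"
  "mp_mult (coset_rep 2) T2 = mp_mult T2_conj (coset_rep 2)"
  "mp_mult (coset_rep 0) L2 = mp_mult L2 (coset_rep 0)"
  "mp_mult (coset_rep 1) L2 = mp_mult L2_conj (coset_rep 1)"
  "mp_mult (coset_rep 2) L2 = mp_mult L2 (coset_rep 2)"
  "mp_mult (coset_rep 1) T_inv = coset_rep 0"
  "mp_mult (coset_rep 2) L_inv = coset_rep 0"
  "mp_mult (coset_rep 0) (coset_rep 1) = coset_rep 1"
  "mp_mult (coset_rep 0) (coset_rep 2) = coset_rep 2"
  using M_pos
  by (auto simp: coset_rep_def T2_def L2_def T2_conj_def L2_conj_def T_inv_def L_inv_def
      translation_def cocycle_def hilbert_R_def algebra_simps)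

lemma theta_coset_relations:
  "theta_coset (fst (mp_mult (coset_rep 0) T_inv)) = 1"
  "theta_coset (fst (mp_mult (coset_rep 2) T_inv)) = 2"
  "theta_coset (fst (mp_mult (coset_rep 0) L_inv)) = 2"
  "theta_coset (fst (mp_mult (coset_rep 1) L_inv)) = 1"
  "theta_coset (fst (mp_mult (coset_rep 1) (coset_rep 1))) = 0"
  "theta_coset (fst (mp_mult (coset_rep 2) (coset_rep 1))) = 2"
  "theta_coset (fst (mp_mult (coset_rep 1) (coset_rep 2))) = 1"
  "theta_coset (fst (mp_mult (coset_rep 2) (coset_rep 2))) = 0"
  using M_odd by (auto simp: coset_rep_def T_inv_def L_inv_def translation_def)

lemma sigma_T2: "\<sigma> T2 = 1" and sigma_L2: "\<sigma> L2 = 1"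
  using dirichlet by (simp_all add: T2_def L2_def translation_def dirichlet_character_def)

text \<open>For \<open>d \<equiv> 3 (mod 4)\<close> the factor \<open>\<epsilon>\<^sub>d\<^sup>-\<^sup>1 = -\<i>\<close> makes \<open>\<lambda>\<close> purely imaginary.\<close>

lemma lambda_bar_ne_1:
  assumes "even c" "d mod 4 = 3" "\<chi> d = 1"
  shows "lambda_bar \<chi> ((a, b, c, d), 1) \<noteq> 1"
proof -
  have "lambda_bar \<chi> ((a, b, c, d), 1) = - \<i> * of_int (kronecker (2 * c) d)"
    using assms by (simp add: eps_def)
  moreover have "- \<i> * of_int k \<noteq> 1" for k :: int by (simp add: complex_eq_iff)
  ultimately show ?thesis by simp
qed

lemma sigma_T2_conj: "\<sigma> T2_conj \<noteq> 1" and sigma_L2_conj: "\<sigma> L2_conj \<noteq> 1"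
proof -
  have "\<chi> (1 + k * int N) = 1" for k
    using dirichlet_character_periodic[OF dirichlet] dirichlet
      by (simp add: dirichlet_character_def)
  from this[of "2 * int N"] this[of "- 2 * int N"]
  have "\<chi> (1 + 2 * M) = 1" "\<chi> (1 - 2 * M) = 1" by (simp_all add: power2_eq_square mult_ac)
  moreover have "(1 + 2 * m) mod 4 = 3" "(1 - 2 * m) mod 4 = 3" if "odd m" for m :: int
    using that by presburger+
  note this[OF M_odd]
  ultimately show "\<sigma> T2_conj \<noteq> 1" "\<sigma> L2_conj \<noteq> 1"
    using lambda_bar_ne_1[where c = "- 2 * M * M" and d = "1 + 2 * M" and a = "1 - 2 * M" and b = 2]
      lambda_bar_ne_1[where c = "2 * M" and d = "1 - 2 * M" and a = "1 + 2 * M" and b = "- 2 * M"]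
    by (simp_all add: T2_conj_def L2_conj_def del: lambda_bar.simps)
qed

abbreviation "\<rho> \<equiv> right_transl G mp_mult"

lemma rho_coset_rep: "\<rho> g F (coset_rep i) = F (mp_mult (coset_rep i) g)"
  using coset_rep_in_G by (simp add: right_transl_def)

lemma rho_T2:
  assumes "F \<in> V"
  shows "\<rho> T2 F (coset_rep 0) = F (coset_rep 0)" "\<rho> T2 F (coset_rep 1) = F (coset_rep 1)"
    "\<rho> T2 F (coset_rep 2) = \<sigma> T2_conj * F (coset_rep 2)"
  unfolding rho_coset_rep coset_rep_relations
  using ind_space_mult[OF assms special_elements_in_H(1) coset_rep_in_G]
    ind_space_mult[OF assms special_elements_in_H(3) coset_rep_in_G] sigma_T2 by simp_all

lemma rho_L2:
  assumes "F \<in> V"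
  shows "\<rho> L2 F (coset_rep 0) = F (coset_rep 0)"
    "\<rho> L2 F (coset_rep 1) = \<sigma> L2_conj * F (coset_rep 1)"
    "\<rho> L2 F (coset_rep 2) = F (coset_rep 2)"
  unfolding rho_coset_rep coset_rep_relations
  using ind_space_mult[OF assms special_elements_in_H(2) coset_rep_in_G]
    ind_space_mult[OF assms special_elements_in_H(4) coset_rep_in_G] sigma_L2 by simp_all

lemma rho_T_inv:
  assumes "F \<in> V" "F (coset_rep 1) = 0" "F (coset_rep 2) = 0"
  shows "\<rho> T_inv F (coset_rep 0) = 0" "\<rho> T_inv F (coset_rep 1) = F (coset_rep 0)"
    "\<rho> T_inv F (coset_rep 2) = 0"
  unfolding rho_coset_rep coset_rep_relations
  using V_vanish[OF assms(1) mp_Gamma0_closed[OF coset_rep_in_G special_elements_in_G(3)]]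
    theta_coset_relations assms(2,3) by simp_all

lemma rho_L_inv:
  assumes "F \<in> V" "F (coset_rep 1) = 0" "F (coset_rep 2) = 0"
  shows "\<rho> L_inv F (coset_rep 0) = 0" "\<rho> L_inv F (coset_rep 1) = 0"
    "\<rho> L_inv F (coset_rep 2) = F (coset_rep 0)"
  unfolding rho_coset_rep coset_rep_relations
  using V_vanish[OF assms(1) mp_Gamma0_closed[OF coset_rep_in_G special_elements_in_G(4)]]
    theta_coset_relations assms(2,3) by simp_all

lemma rho_coset_rep_1:
  assumes "F \<in> V" "F (coset_rep 0) = 0" "F (coset_rep 2) = 0"
  shows "\<rho> (coset_rep 1) F (coset_rep 0) = F (coset_rep 1)" "\<rho> (coset_rep 1) F (coset_rep 1) = 0"
    "\<rho> (coset_rep 1) F (coset_rep 2) = 0"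
  unfolding rho_coset_rep coset_rep_relations
  using V_vanish[OF assms(1) mp_Gamma0_closed[OF coset_rep_in_G coset_rep_in_G]]
    theta_coset_relations assms(2,3) by simp_all

lemma rho_coset_rep_2:
  assumes "F \<in> V" "F (coset_rep 0) = 0" "F (coset_rep 1) = 0"
  shows "\<rho> (coset_rep 2) F (coset_rep 0) = F (coset_rep 2)" "\<rho> (coset_rep 2) F (coset_rep 1) = 0"
    "\<rho> (coset_rep 2) F (coset_rep 2) = 0"
  unfolding rho_coset_rep coset_rep_relations
  using V_vanish[OF assms(1) mp_Gamma0_closed[OF coset_rep_in_G coset_rep_in_G]]
    theta_coset_relations assms(2,3) by simp_all

lemma V_nonzero_coordinate:
  assumes "F \<in> V" "F \<noteq> (\<lambda>_. 0)"
  shows "F (coset_rep 0) \<noteq> 0 \<or> F (coset_rep 1) \<noteq> 0 \<or> F (coset_rep 2) \<noteq> 0"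
proof (rule ccontr)
  have "(\<lambda>_. 0) \<in> V" by (simp add: ind_space_def)
  moreover assume "\<not> ?thesis"
  ultimately have "F = (\<lambda>_. 0)" using V_eqI[OF assms(1)] by auto
  with assms(2) show False ..
qed

text \<open>Projecting with \<open>\<rho> T2 - \<sigma> T2_conj\<close>, \<open>\<rho> T2 - 1\<close> and their analogues for \<open>L2\<close> isolates a
  single nonzero coordinate, which \<open>\<rho> (coset_rep i)\<close> then moves to the coset \<open>H\<close>.\<close>

lemma invariant_subspace_vector_on_H_from_coset_2:
  assumes W: "invariant_subspace G mp_mult V W" and "f \<in> W" "f (coset_rep 2) \<noteq> 0"
  shows "\<exists>\<psi>\<in>W. \<psi> (coset_rep 0) \<noteq> 0 \<and> \<psi> (coset_rep 1) = 0 \<and> \<psi> (coset_rep 2) = 0"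
proof -
  have fV: "f \<in> V" using W \<open>f \<in> W\<close> by (auto simp: invariant_subspace_def)
  define P where "P = (\<lambda>x. 1 * \<rho> T2 f x + (- 1) * f x)"
  have PW: "P \<in> W" unfolding P_def
    by (intro invariant_subspace_lincomb[OF W] invariant_subspace_right_transl[OF W]
        \<open>f \<in> W\<close> special_elements_in_G)
  then have PV: "P \<in> V" using W by (auto simp: invariant_subspace_def)
  have P: "P (coset_rep 0) = 0" "P (coset_rep 1) = 0"
    "P (coset_rep 2) = (\<sigma> T2_conj - 1) * f (coset_rep 2)"
    unfolding P_def rho_T2[OF fV] by (simp_all add: algebra_simps)
  have "\<rho> (coset_rep 2) P \<in> W" by (intro invariant_subspace_right_transl[OF W] PW coset_rep_in_G)
  then show ?thesis
    using rho_coset_rep_2[OF PV P(1,2)] P(3) sigma_T2_conj \<open>f (coset_rep 2) \<noteq> 0\<close>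
    by (intro bexI[of _ "\<rho> (coset_rep 2) P"]) auto
qed

lemma invariant_subspace_vector_on_H_from_coset_0_1:
  assumes W: "invariant_subspace G mp_mult V W" and "f \<in> W"
    and "f (coset_rep 0) \<noteq> 0 \<or> f (coset_rep 1) \<noteq> 0"
  shows "\<exists>\<psi>\<in>W. \<psi> (coset_rep 0) \<noteq> 0 \<and> \<psi> (coset_rep 1) = 0 \<and> \<psi> (coset_rep 2) = 0"
proof -
  have sub: "W \<subseteq> V" using W by (simp add: invariant_subspace_def)
  note lincomb = invariant_subspace_lincomb[OF W]
  note transl = invariant_subspace_right_transl[OF W]
  define \<alpha> \<beta> where "\<alpha> = \<sigma> T2_conj" and "\<beta> = \<sigma> L2_conj"
  have "\<alpha> \<noteq> 1" "\<beta> \<noteq> 1" using sigma_T2_conj sigma_L2_conj by (simp_all add: \<alpha>_def \<beta>_def)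
  have fV: "f \<in> V" using \<open>f \<in> W\<close> sub by blast
  define X where "X = (\<lambda>x. 1 * \<rho> T2 f x + (- \<alpha>) * f x)"
  have XW: "X \<in> W" unfolding X_def by (intro lincomb transl \<open>f \<in> W\<close> special_elements_in_G)
  then have XV: "X \<in> V" using sub by blast
  have X: "X (coset_rep 0) = (1 - \<alpha>) * f (coset_rep 0)"
    "X (coset_rep 1) = (1 - \<alpha>) * f (coset_rep 1)" "X (coset_rep 2) = 0"
    unfolding X_def rho_T2[OF fV] \<alpha>_def by (simp_all add: algebra_simps)
  show ?thesis
  proof (cases "f (coset_rep 0) \<noteq> 0")
    case True
    define P where "P = (\<lambda>x. 1 * \<rho> L2 X x + (- \<beta>) * X x)"
    have "P \<in> W" unfolding P_def by (intro lincomb transl XW special_elements_in_G)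
    moreover have "P (coset_rep 0) = (1 - \<beta>) * ((1 - \<alpha>) * f (coset_rep 0))"
      "P (coset_rep 1) = 0" "P (coset_rep 2) = 0"
      unfolding P_def rho_L2[OF XV] X \<beta>_def by (simp_all add: algebra_simps)
    ultimately show ?thesis using \<open>\<alpha> \<noteq> 1\<close> \<open>\<beta> \<noteq> 1\<close> True by (intro bexI[of _ P]) auto
  next
    case False
    define P where "P = (\<lambda>x. 1 * \<rho> L2 X x + (- 1) * X x)"
    have PW: "P \<in> W" unfolding P_def by (intro lincomb transl XW special_elements_in_G)
    then have PV: "P \<in> V" using sub by blast
    have P: "P (coset_rep 0) = 0" "P (coset_rep 1) = (\<beta> - 1) * ((1 - \<alpha>) * f (coset_rep 1))"
      "P (coset_rep 2) = 0"
      unfolding P_def rho_L2[OF XV] X \<beta>_def by (simp_all add: algebra_simps)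
    have "\<rho> (coset_rep 1) P \<in> W" by (intro transl PW coset_rep_in_G)
    then show ?thesis
      using rho_coset_rep_1[OF PV P(1,3)] P(2) \<open>\<alpha> \<noteq> 1\<close> \<open>\<beta> \<noteq> 1\<close> False assms(3)
      by (intro bexI[of _ "\<rho> (coset_rep 1) P"]) auto
  qed
qed

lemma invariant_subspace_has_vector_on_H:
  assumes W: "invariant_subspace G mp_mult V W" and "f \<in> W" "f \<noteq> (\<lambda>_. 0)"
  shows "\<exists>\<psi>\<in>W. \<psi> (coset_rep 0) \<noteq> 0 \<and> \<psi> (coset_rep 1) = 0 \<and> \<psi> (coset_rep 2) = 0"
proof -
  have "f \<in> V" using W \<open>f \<in> W\<close> by (auto simp: invariant_subspace_def)
  then show ?thesis
    using V_nonzero_coordinate[OF _ \<open>f \<noteq> (\<lambda>_. 0)\<close>] \<open>f \<in> W\<close>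
      invariant_subspace_vector_on_H_from_coset_0_1[OF W]
      invariant_subspace_vector_on_H_from_coset_2[OF W]
    by blast
qed

lemma invariant_subspace_eq_V:
  assumes W: "invariant_subspace G mp_mult V W" and "W \<noteq> {\<lambda>_. 0}"
  shows "W = V"
proof
  show sub: "W \<subseteq> V" using W by (simp add: invariant_subspace_def)
  note lincomb = invariant_subspace_lincomb[OF W]
  note transl = invariant_subspace_right_transl[OF W]
  obtain f where "f \<in> W" "f \<noteq> (\<lambda>_. 0)"
    using assms W by (auto simp: invariant_subspace_def)
  then obtain \<psi> where \<psi>: "\<psi> \<in> W" "\<psi> (coset_rep 0) \<noteq> 0" "\<psi> (coset_rep 1) = 0" "\<psi> (coset_rep 2) = 0"
    using invariant_subspace_has_vector_on_H[OF W] by blast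
  have \<psi>V: "\<psi> \<in> V" using \<psi>(1) sub by blast
  show "V \<subseteq> W"
  proof
    fix F assume FV: "F \<in> V"
    define c where "c = \<psi> (coset_rep 0)"
    define \<Phi> where "\<Phi> = (\<lambda>x. (F (coset_rep 0) / c) * \<psi> x +
      1 * (\<lambda>x. (F (coset_rep 1) / c) * \<rho> T_inv \<psi> x + (F (coset_rep 2) / c) * \<rho> L_inv \<psi> x) x)"
    have \<Phi>W: "\<Phi> \<in> W" unfolding \<Phi>_def by (intro lincomb transl \<psi>(1) special_elements_in_G)
    have "F = \<Phi>"
    proof (rule V_eqI[OF FV])
      show "\<Phi> \<in> V" using \<Phi>W sub by blast
      show "F (coset_rep i) = \<Phi> (coset_rep i)" if "i \<in> {0, 1, 2}" for i
        using that \<psi>(2) rho_T_inv[OF \<psi>V \<psi>(3,4)] rho_L_inv[OF \<psi>V \<psi>(3,4)] \<psi>(3,4)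
        by (auto simp: \<Phi>_def c_def)
    qed
    with \<Phi>W show "F \<in> W" by simp
  qed
qed

end

theorem mainTheorem10:
  fixes N :: nat and \<chi> :: "int \<Rightarrow> complex"
  assumes "N \<ge> 1" and "odd N"
    and "primitive_dirichlet_character N \<chi>"
  shows "irreducible_ind_rep (mp_Gamma0 (N^2)) mp_mult (mp_Gamma_theta0 (N^2))
           (\<lambda>h. inverse (lambda_bar \<chi> h))"
proof -
  have "dirichlet_character N \<chi>"
    using assms(3) by (simp add: primitive_dirichlet_character_def)
  then interpret theta_induced N \<chi> using assms(2) by unfold_locales
  show ?thesis
    unfolding irreducible_ind_rep_def Let_def using V_nonzero invariant_subspace_eq_V by blast
qed

end
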